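(* Let $n\ge2$ be an integer, $x_0,t_0\in\mathbb{R}$, $\beta>0$, $\psi(t,x)=(x-x_0)^2-\beta(t-t_0)^2$, $\ell=\lambda\psi$ with $\lambda\ge 1$, and let $w\in C^\infty(\mathbb{R}^2;\mathbb{R})$. With $I_1(w),I_2(w)$ as defined in the context, one has the pointwise identity $$I_1(w)I_2(w)=\partial_x G+\sum_{m=0}^{n-1}\Big[\frac{n^2}{2}\binom{n-1}{m}\ell_x^{\,2n-2m-2}\ell_{xx}+R_m\Big]|\partial_x^m w|^2,$$ where $G$ is a finite sum of terms of the form $c\,\ell_x^{\,a}\ell_{xx}^{\,b}\,\partial_x^{i}w\,\partial_x^{j}w$ ($c\in\mathbb{R}$, $a,b,i,j\in\mathbb{Z}_{\ge0}$), and each $R_m$ is a polynomial in $\ell_x,\ell_{xx}$ (independent of $w$) such that on every bounded set of $(t,x)$ one has $|R_m|\le C\lambda^{2n-2m-3}$ for a constant $C$ independent of $\lambda\ge1$.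
   Context: $\binom{j}{k}$ denotes the binomial coefficient (zero unless $0\le k\le j$). For a smooth $w$ define $$I_1(w)=\sum_{\substack{j\in[0,n]\\ j\ \text{odd}}}\binom{n}{j}(-1)^{n-j}\ell_x^{\,n-j}\partial_x^j w-\binom{n}{2}\ell_{xx}\sum_{\substack{k\in[0,n-2]\\ k\ \text{even}}}\binom{n-2}{k}(-1)^{n-2-k}\ell_x^{\,n-2-k}\partial_x^k w,$$ $$I_2(w)=\sum_{\substack{k\in[0,n]\\ k\ \text{even}}}\binom{n}{k}(-1)^{n-k}\ell_x^{\,n-k}\partial_x^k w-\binom{n}{2}\ell_{xx}\sum_{\substack{j\in[0,n-2]\\ j\ \text{odd}}}\binom{n-2}{j}(-1)^{n-2-j}\ell_x^{\,n-2-j}\partial_x^j w.$$ (These are the parts of $e^{\ell}\partial_x^n(e^{-\ell}w)$ consisting of the highest-$\lambda$-order terms with odd (resp. even) $x$-derivatives of $w$ plus the next-highest-order terms with even (resp. odd) derivatives.) *)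

theory Defs
  imports "HOL-Analysis.Analysis"
begin

definition partial_x :: "(real \<times> real \<Rightarrow> real) \<Rightarrow> real \<times> real \<Rightarrow> real" where
  "partial_x f = (\<lambda>(t, x). deriv (\<lambda>y. f (t, y)) x)"

definition partial_t :: "(real \<times> real \<Rightarrow> real) \<Rightarrow> real \<times> real \<Rightarrow> real" where
  "partial_t f = (\<lambda>(t, x). deriv (\<lambda>s. f (s, x)) t)"

fun pd :: "bool list \<Rightarrow> (real \<times> real \<Rightarrow> real) \<Rightarrow> real \<times> real \<Rightarrow> real" where
  "pd [] f = f"
| "pd (d # ds) f = (if d then partial_x else partial_t) (pd ds f)"

definition smooth2 :: "(real \<times> real \<Rightarrow> real) \<Rightarrow> bool" where
  "smooth2 f \<longleftrightarrow> (\<forall>ds. pd ds f differentiable_on UNIV \<and> continuous_on UNIV (pd ds f))"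

definition dx :: "nat \<Rightarrow> (real \<times> real \<Rightarrow> real) \<Rightarrow> real \<times> real \<Rightarrow> real" where
  "dx j f = (partial_x ^^ j) f"

definition psi :: "real \<Rightarrow> real \<Rightarrow> real \<Rightarrow> real \<times> real \<Rightarrow> real" where
  "psi x0 t0 \<beta> = (\<lambda>(t, x). (x - x0)^2 - \<beta> * (t - t0)^2)"

definition ell :: "real \<Rightarrow> real \<Rightarrow> real \<Rightarrow> real \<Rightarrow> real \<times> real \<Rightarrow> real" where
  "ell lam x0 t0 \<beta> = (\<lambda>p. lam * psi x0 t0 \<beta> p)"

definition I1 :: "nat \<Rightarrow> (real \<times> real \<Rightarrow> real) \<Rightarrow> (real \<times> real \<Rightarrow> real) \<Rightarrow> real \<times> real \<Rightarrow> real" where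
  "I1 n l w p =
     (\<Sum>j\<in>{j. j \<le> n \<and> odd j}. of_nat (n choose j) * (-1)^(n - j) * (partial_x l p)^(n - j) * dx j w p)
     - of_nat (n choose 2) * partial_x (partial_x l) p *
       (\<Sum>k\<in>{k. k \<le> n - 2 \<and> even k}. of_nat ((n - 2) choose k) * (-1)^(n - 2 - k) * (partial_x l p)^(n - 2 - k) * dx k w p)"

definition I2 :: "nat \<Rightarrow> (real \<times> real \<Rightarrow> real) \<Rightarrow> (real \<times> real \<Rightarrow> real) \<Rightarrow> real \<times> real \<Rightarrow> real" where
  "I2 n l w p =
     (\<Sum>k\<in>{k. k \<le> n \<and> even k}. of_nat (n choose k) * (-1)^(n - k) * (partial_x l p)^(n - k) * dx k w p)
     - of_nat (n choose 2) * partial_x (partial_x l) p *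
       (\<Sum>j\<in>{j. j \<le> n - 2 \<and> odd j}. of_nat ((n - 2) choose j) * (-1)^(n - 2 - j) * (partial_x l p)^(n - 2 - j) * dx j w p)"

definition Gsum :: "nat \<Rightarrow> (nat \<Rightarrow> nat \<Rightarrow> nat \<Rightarrow> nat \<Rightarrow> real) \<Rightarrow> (real \<times> real \<Rightarrow> real) \<Rightarrow> (real \<times> real \<Rightarrow> real) \<Rightarrow> real \<times> real \<Rightarrow> real" where
  "Gsum D g l w p = (\<Sum>a\<le>D. \<Sum>b\<le>D. \<Sum>i\<le>D. \<Sum>j\<le>D.
      g a b i j * (partial_x l p)^a * (partial_x (partial_x l) p)^b * dx i w p * dx j w p)"

definition Rpoly :: "nat \<Rightarrow> (nat \<Rightarrow> nat \<Rightarrow> real) \<Rightarrow> (real \<times> real \<Rightarrow> real) \<Rightarrow> real \<times> real \<Rightarrow> real" where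
  "Rpoly D c l p = (\<Sum>a\<le>D. \<Sum>b\<le>D. c a b * (partial_x l p)^a * (partial_x (partial_x l) p)^b)"

end

theory Submission
  imports Defs "HOL-Computational_Algebra.Polynomial"
begin

text \<open>
  Write s = l_x, c = l_xx = 2 lam (constant in x) and u_i = d_x^i w. Then I1 w * I2 w is a
  linear combination of monomials s^a c^b u_i u_j, and the integration by parts
    s^a c^b u_i u_(i+d) = d_x (s^a c^b u_i u_(i+d-1))
                          - a s^(a-1) c^(b+1) u_i u_(i+d-1) - s^a c^b u_(i+1) u_(i+d-1),
  iterated until the two indices meet, turns each monomial into an x-derivative plus
  multiples of squares s^a c^b u_m^2.
  Counting s, c and every derivative as one power of lam, the order a + b + i + j never
  increases, and a square coming from a monomial with i + j odd loses at least one order.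
  The monomials of I1 w * I2 w have order 2n with i + j odd, or order at most 2n - 1, so
  every square has odd order at most 2n - 1. The squares of order exactly 2n - 1 can be
  followed through the reduction explicitly; their total coefficient is evaluated with the
  generating functions (1 + X)^n and (1 - X)^n, whose product is (1 - X^2)^n. All other
  squares have order at most 2n - 3, which gives the bound lam^(2n-2m-3) on bounded sets.
\<close>

lemma if_zero_mult: "(if P then x else (0::real)) * y = (if P then x * y else 0)"
  by simp

lemma sum_list_map_eq_zero: "(\<forall>e\<in>set L. f e = 0) \<Longrightarrow> sum_list (map f L) = (0::real)"
  by (induction L) auto

lemma sum_list_map_concat: "sum_list (map f (concat xs)) = sum_list (map (\<lambda>x. sum_list (map f x)) xs)"
  by (induction xs) auto

section \<open>Symbolic integration by parts\<close>

text \<open>A quadratic term (k, a, b, i, j) stands for k s^a c^b u_i u_j and a square term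
  (k, a, b, m) for k s^a c^b u_m^2.\<close>

type_synonym qterm = "real \<times> nat \<times> nat \<times> nat \<times> nat"
type_synonym sqterm = "real \<times> nat \<times> nat \<times> nat"

fun qterm_val :: "real \<Rightarrow> real \<Rightarrow> (nat \<Rightarrow> real) \<Rightarrow> qterm \<Rightarrow> real" where
  "qterm_val s c u (k,a,b,i,j) = k * s^a * c^b * u i * u j"

text \<open>The derivative of qterm_val when s' = c, c' = 0 and u_i' = u_(i+1).\<close>

fun qterm_deriv :: "real \<Rightarrow> real \<Rightarrow> (nat \<Rightarrow> real) \<Rightarrow> qterm \<Rightarrow> real" where
  "qterm_deriv s c u (k,a,b,i,j) = k * (of_nat a * s^(a-1) * c^(b+1) * u i * u j + s^a * c^b * (u (Suc i) * u j + u i * u (Suc j)))"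

fun sqterm_val :: "real \<Rightarrow> real \<Rightarrow> (nat \<Rightarrow> real) \<Rightarrow> sqterm \<Rightarrow> real" where
  "sqterm_val s c u (k,a,b,m) = k * s^a * c^b * (u m)^2"

text \<open>ibp k a b i d integrates k s^a c^b u_i u_(i+d) by parts: the first component lists
  the antiderivatives, the second the squares that remain.\<close>

fun ibp :: "real \<Rightarrow> nat \<Rightarrow> nat \<Rightarrow> nat \<Rightarrow> nat \<Rightarrow> qterm list \<times> sqterm list" where
  "ibp k a b i 0 = ([], [(k,a,b,i)])"
| "ibp k a b i (Suc 0) = ([(k/2,a,b,i,i)], if a = 0 then [] else [(-k * of_nat a/2, a-1, b+1, i)])"
| "ibp k a b i (Suc (Suc d)) =
    ((k,a,b,i,i+Suc d) # (if a = 0 then [] else fst (ibp (-k * of_nat a) (a-1) (b+1) i (Suc d))) @ fst (ibp (-k) a b (Suc i) d),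
     (if a = 0 then [] else snd (ibp (-k * of_nat a) (a-1) (b+1) i (Suc d))) @ snd (ibp (-k) a b (Suc i) d))"

abbreviation deriv_sum :: "real \<Rightarrow> real \<Rightarrow> (nat \<Rightarrow> real) \<Rightarrow> qterm list \<Rightarrow> real" where "deriv_sum s c u L \<equiv> sum_list (map (qterm_deriv s c u) L)"
abbreviation sq_sum :: "real \<Rightarrow> real \<Rightarrow> (nat \<Rightarrow> real) \<Rightarrow> sqterm list \<Rightarrow> real" where "sq_sum s c u L \<equiv> sum_list (map (sqterm_val s c u) L)"

lemma qterm_val_ibp:
  "qterm_val s c u (k,a,b,i,i+d) = deriv_sum s c u (fst (ibp k a b i d)) + sq_sum s c u (snd (ibp k a b i d))"
proof (induction k a b i d rule: ibp.induct)
  case (1 k a b i)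
  then show ?case by (simp add: power2_eq_square)
next
  case (2 k a b i)
  then show ?case
  proof (cases a)
    case 0 then show ?thesis by (simp add: power2_eq_square algebra_simps)
  next
    case (Suc a') then show ?thesis by (simp add: power2_eq_square field_simps)
  qed
next
  case (3 k a b i d)
  then show ?case by (cases a) (simp_all add: algebra_simps)
qed

text \<open>Every square produced by ibp k a b i d has order at most ibp_order a b i d and of the
  same parity; for odd d this is one less than the order a + b + 2i + d of the monomial.\<close>

definition ibp_order :: "nat \<Rightarrow> nat \<Rightarrow> nat \<Rightarrow> nat \<Rightarrow> nat" where
  "ibp_order a b i d = a + b + 2*i + d - d mod 2"

lemma ibp_sq_order:
  "(k', a', b', m) \<in> set (snd (ibp k a b i d)) \<Longrightarrow> \<exists>q. ibp_order a b i d = a' + b' + 2*m + 2*q"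
proof (induction k a b i d rule: ibp.induct)
  case (1 k a b i)
  then show ?case by (intro exI[of _ 0]) (simp add: ibp_order_def)
next
  case (2 k a b i)
  then show ?case by (intro exI[of _ 0]) (auto simp: ibp_order_def split: if_splits)
next
  case (3 k a b i d)
  from "3.prems" consider
      (lower) "a \<noteq> 0" "(k', a', b', m) \<in> set (snd (ibp (-k * of_nat a) (a-1) (b+1) i (Suc d)))"
    | (shift) "(k', a', b', m) \<in> set (snd (ibp (-k) a b (Suc i) d))"
    by (auto split: if_splits)
  then show ?case
  proof cases
    case lower
    then obtain q where q: "ibp_order (a-1) (b+1) i (Suc d) = a' + b' + 2*m + 2*q"
      using "3.IH"(1) by blast
    have "ibp_order a b i (Suc (Suc d)) = ibp_order (a-1) (b+1) i (Suc d) + 2 * (Suc d mod 2)"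
      using lower(1) by (cases "even d") (auto simp: ibp_order_def elim!: evenE oddE)
    then show ?thesis using q by (intro exI[of _ "q + Suc d mod 2"]) simp
  next
    case shift
    then show ?thesis using "3.IH"(2) by (simp add: ibp_order_def)
  qed
qed

lemma ibp_degree_bounds:
  "(\<forall>(k',a',b',i',j') \<in> set (fst (ibp k a b i d)). a' \<le> a \<and> b' \<le> a + b \<and> i' \<le> i + d \<and> j' \<le> i + d)
 \<and> (\<forall>(k',a',b',m) \<in> set (snd (ibp k a b i d)). a' \<le> a \<and> b' \<le> a + b \<and> m \<le> i + d)"
proof (induction k a b i d rule: ibp.induct)
  case (3 k a b i d)
  then show ?case by (fastforce split: if_splits)
qed auto

lemma ibp_zero_coeff:
  "\<forall>e \<in> set (snd (ibp 0 a b i d)). fst e = 0"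
  by (induction "0::real" a b i d rule: ibp.induct) auto

fun top_coeff :: "real \<Rightarrow> real \<Rightarrow> nat \<Rightarrow> nat \<Rightarrow> sqterm \<Rightarrow> real" where
  "top_coeff s c E m (k',a',b',m') = (if a' + b' + 2*m' = E \<and> m' = m then k' * s^a' * c^b' else 0)"

text \<open>The squares of maximal order: for even d only the index shifts keep the order, for odd d
  exactly one of the steps must lower the power of s instead.\<close>

definition ibp_top_coeff :: "real \<Rightarrow> real \<Rightarrow> real \<Rightarrow> nat \<Rightarrow> nat \<Rightarrow> nat \<Rightarrow> nat \<Rightarrow> nat \<Rightarrow> real" where
  "ibp_top_coeff s c k a b i d m =
    (if m = i + d div 2 then
       (if even d then k * (-1)^(d div 2) * s^a * c^b
        else - k * (-1)^(d div 2) * (of_nat d / 2) * of_nat a * s^(a-1) * c^(b+1))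
     else 0)"

lemma ibp_top:
  "ibp_order a b i d \<le> E \<Longrightarrow>
   sum_list (map (top_coeff s c E m) (snd (ibp k a b i d))) = (if E = ibp_order a b i d then ibp_top_coeff s c k a b i d m else 0)"
proof (induction k a b i d rule: ibp.induct)
  case (3 k a b i d)
  have shift_order: "ibp_order a b (Suc i) d = ibp_order a b i (Suc (Suc d))"
    by (simp add: ibp_order_def)
  have shift: "sum_list (map (top_coeff s c E m) (snd (ibp (-k) a b (Suc i) d))) =
       (if E = ibp_order a b i (Suc (Suc d)) then ibp_top_coeff s c (-k) a b (Suc i) d m else 0)"
    using "3.IH"(2) "3.prems" shift_order by simp
  show ?case
  proof (cases "even d")
    case True
    then obtain q where q: "d = 2*q" by auto
    have lower: "sum_list (map (top_coeff s c E m) (snd (ibp (-k * of_nat a) (a-1) (b+1) i (Suc d)))) = 0" if "a \<noteq> 0"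
    proof -
      have "ibp_order (a-1) (b+1) i (Suc d) + 2 = ibp_order a b i (Suc (Suc d))" using that q by (simp add: ibp_order_def)
      then show ?thesis using "3.IH"(1)[OF that] "3.prems" by auto
    qed
    have "ibp_top_coeff s c (-k) a b (Suc i) d m = ibp_top_coeff s c k a b i (Suc (Suc d)) m"
      using q by (simp add: ibp_top_coeff_def)
    then show ?thesis using lower shift by (cases "a = 0") auto
  next
    case False
    then obtain q where q: "d = 2*q+1" using oddE by blast
    show ?thesis
    proof (cases "a = 0")
      case True
      then show ?thesis using shift by (simp add: ibp_top_coeff_def)
    next
      case False
      have "ibp_order (a-1) (b+1) i (Suc d) = ibp_order a b i (Suc (Suc d))" using False q by (simp add: ibp_order_def)
      then have lower: "sum_list (map (top_coeff s c E m) (snd (ibp (-k * of_nat a) (a-1) (b+1) i (Suc d)))) =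
        (if E = ibp_order a b i (Suc (Suc d)) then ibp_top_coeff s c (-k * of_nat a) (a-1) (b+1) i (Suc d) m else 0)"
        using "3.IH"(1)[OF False] "3.prems" by simp
      have "ibp_top_coeff s c (-k * of_nat a) (a-1) (b+1) i (Suc d) m + ibp_top_coeff s c (-k) a b (Suc i) d m
          = ibp_top_coeff s c k a b i (Suc (Suc d)) m"
        using q False by (simp add: ibp_top_coeff_def field_simps)
      then show ?thesis using lower shift False by auto
    qed
  qed
qed (auto simp: ibp_order_def ibp_top_coeff_def)

definition ibp_qterm :: "qterm \<Rightarrow> qterm list \<times> sqterm list" where
  "ibp_qterm e = (case e of (k,a,b,j,j') \<Rightarrow> ibp k a b (min j j') (max j j' - min j j'))"

lemma qterm_val_ibp_qterm: "qterm_val s c u e = deriv_sum s c u (fst (ibp_qterm e)) + sq_sum s c u (snd (ibp_qterm e))"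
proof -
  obtain k a b j j' where e: "e = (k,a,b,j,j')" by (cases e) auto
  have uu: "u j * u j' = u (min j j') * u (max j j')"
    by (cases "j \<le> j'") (auto simp: min_def max_def mult.commute)
  have mm: "min j j' + (max j j' - min j j') = max j j'" by simp
  have "qterm_val s c u e = k * s ^ a * c ^ b * (u (min j j') * u (max j j'))" using uu e by (simp add: mult.assoc)
  also have "\<dots> = qterm_val s c u (k,a,b,min j j', min j j' + (max j j' - min j j'))"
    by (simp only: mm qterm_val.simps mult.assoc)
  also have "\<dots> = deriv_sum s c u (fst (ibp k a b (min j j') (max j j' - min j j'))) + sq_sum s c u (snd (ibp k a b (min j j') (max j j' - min j j')))"
    by (rule qterm_val_ibp)
  finally show ?thesis by (simp add: ibp_qterm_def e)
qed

lemma min_max_cases: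
  obtains (le) d where "min j k = j" "max j k - min j k = d" "k = j + d"
        | (gt) d where "min j k = k" "max j k - min j k = d" "j = k + (d::nat)"
proof (cases "j \<le> k")
  case True
  then obtain d where "k = j + d" using le_Suc_ex by blast
  then show ?thesis using le True by (simp add: min_def max_def)
next
  case False
  then obtain d where "j = k + d" using le_Suc_ex[of k j] by auto
  then show ?thesis using gt False by (simp add: min_def max_def)
qed

definition qterm_order :: "qterm \<Rightarrow> nat" where
  "qterm_order x = (case x of (k,a,b,i,j) \<Rightarrow> a + b + i + j - (i + j) mod 2)"

lemma ibp_order_min_max: "ibp_order a b (min i j) (max i j - min i j) = qterm_order (k,a,b,i,j)"
proof (cases rule: min_max_cases[of i j])
  case (le d)
  have "(i + j) mod 2 = d mod 2" using le(3) by presburger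
  then show ?thesis unfolding ibp_order_def qterm_order_def le(1,2) using le(3) by simp
next
  case (gt d)
  have "(i + j) mod 2 = d mod 2" using gt(3) by presburger
  then show ?thesis unfolding ibp_order_def qterm_order_def gt(1,2) using gt(3) by simp
qed

lemma ibp_qterm_sq_order:
  assumes "(k',a',b',m) \<in> set (snd (ibp_qterm x))"
  shows "\<exists>q. qterm_order x = a' + b' + 2*m + 2*q"
proof -
  obtain k a b i j where x: "x = (k,a,b,i,j)" by (cases x)
  from assms have "(k',a',b',m) \<in> set (snd (ibp k a b (min i j) (max i j - min i j)))"
    by (simp add: x ibp_qterm_def)
  then show ?thesis unfolding x ibp_order_min_max[symmetric] by (rule ibp_sq_order)
qed

lemma ibp_qterm_degree_bounds:
  assumes "x = (k,a,b,i,j)"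
  shows "(\<forall>(k',a',b',i',j') \<in> set (fst (ibp_qterm x)). a' \<le> a \<and> b' \<le> a + b \<and> i' \<le> max i j \<and> j' \<le> max i j)
       \<and> (\<forall>(k',a',b',m) \<in> set (snd (ibp_qterm x)). a' \<le> a \<and> b' \<le> a + b \<and> m \<le> max i j)"
  using ibp_degree_bounds[of k a b "min i j" "max i j - min i j"] by (simp add: assms ibp_qterm_def)

lemma ibp_top_coeff_zero: "ibp_top_coeff s c 0 a b i d m = 0"
  by (simp add: ibp_top_coeff_def)

definition qterm_top_coeff :: "nat \<Rightarrow> real \<Rightarrow> real \<Rightarrow> nat \<Rightarrow> qterm \<Rightarrow> real" where
  "qterm_top_coeff E s c m x = (case x of (k,a,b,i,j) \<Rightarrow>
     if E = qterm_order x then ibp_top_coeff s c k a b (min i j) (max i j - min i j) m else 0)"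

lemma sum_top_coeff_ibp_qterm:
  assumes "fst x \<noteq> 0 \<Longrightarrow> \<exists>q. E = qterm_order x + 2*q"
  shows "sum_list (map (top_coeff s c E m) (snd (ibp_qterm x))) = qterm_top_coeff E s c m x"
proof -
  obtain k a b i j where x: "x = (k,a,b,i,j)" by (cases x)
  show ?thesis
  proof (cases "k = 0")
    case True
    have "\<forall>e\<in>set (snd (ibp 0 a b (min i j) (max i j - min i j))). top_coeff s c E m e = 0"
    proof
      fix e assume "e \<in> set (snd (ibp 0 a b (min i j) (max i j - min i j)))"
      then have "fst e = 0" using ibp_zero_coeff by blast
      then show "top_coeff s c E m e = 0" by (cases e) auto
    qed
    then show ?thesis
      using True by (simp add: x ibp_qterm_def qterm_top_coeff_def ibp_top_coeff_zero sum_list_map_eq_zero)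
  next
    case False
    then obtain q where "E = qterm_order x + 2*q" using assms x by auto
    then have "ibp_order a b (min i j) (max i j - min i j) \<le> E" by (simp add: x ibp_order_min_max[of _ _ _ _ k])
    from ibp_top[OF this, of s c m k] show ?thesis
      by (simp add: x ibp_qterm_def qterm_top_coeff_def ibp_order_min_max[of _ _ _ _ k])
  qed
qed

lemma sum_qterm_val_ibp: "sum_list (map (qterm_val s c u) L) =
   deriv_sum s c u (concat (map (fst \<circ> ibp_qterm) L)) + sq_sum s c u (concat (map (snd \<circ> ibp_qterm) L))"
  by (induction L) (auto simp: qterm_val_ibp_qterm)

definition qterm_coeffs :: "qterm list \<Rightarrow> nat \<Rightarrow> nat \<Rightarrow> nat \<Rightarrow> nat \<Rightarrow> real" where
  "qterm_coeffs L a b i j = sum_list (map fst (filter (\<lambda>(k,a',b',i',j'). a' = a \<and> b' = b \<and> i' = i \<and> j' = j) L))"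

lemma sum_delta_if_conj: "finite A \<Longrightarrow> x0 \<in> A \<Longrightarrow> (\<Sum>x\<in>A. if P \<and> x = x0 then f x else 0) = (if P then f x0 else (0::real))"
  by (cases P) (simp_all add: sum.delta')

lemma sum_qterm_val_eq_coeffs:
  assumes "\<forall>(k,a',b',i',j')\<in>set L. a' \<le> D \<and> b' \<le> D \<and> i' \<le> D \<and> j' \<le> D"
  shows "sum_list (map (qterm_val s c u) L) =
    (\<Sum>a\<le>D. \<Sum>b\<le>D. \<Sum>i\<le>D. \<Sum>j\<le>D. qterm_coeffs L a b i j * s^a * c^b * u i * u j)"
  using assms
proof (induction L)
  case Nil
  then show ?case by (simp add: qterm_coeffs_def)
next
  case (Cons e L)
  obtain k a0 b0 i0 j0 where e: "e = (k,a0,b0,i0,j0)" by (cases e) auto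
  have g: "qterm_coeffs (e # L) a b i j = (if a = a0 \<and> b = b0 \<and> i = i0 \<and> j = j0 then k else 0) + qterm_coeffs L a b i j" for a b i j
    by (simp add: qterm_coeffs_def e)
  have bnd: "a0 \<le> D" "b0 \<le> D" "i0 \<le> D" "j0 \<le> D" using Cons.prems e by auto
  have d: "(\<Sum>a\<le>D. \<Sum>b\<le>D. \<Sum>i\<le>D. \<Sum>j\<le>D. (if a = a0 \<and> b = b0 \<and> i = i0 \<and> j = j0 then k else 0) * s^a * c^b * u i * u j)
     = qterm_val s c u e"
  proof -
    have bb: "a0 \<in> {..D}" "b0 \<in> {..D}" "i0 \<in> {..D}" "j0 \<in> {..D}" using bnd by auto
    have "(\<Sum>a\<le>D. \<Sum>b\<le>D. \<Sum>i\<le>D. \<Sum>j\<le>D. (if a = a0 \<and> b = b0 \<and> i = i0 \<and> j = j0 then k else 0) * s^a * c^b * u i * u j)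
      = (\<Sum>a\<le>D. \<Sum>b\<le>D. \<Sum>i\<le>D. \<Sum>j\<le>D. if (((True \<and> a = a0) \<and> b = b0) \<and> i = i0) \<and> j = j0 then k * s^a * c^b * u i * u j else 0)"
      by (intro sum.cong refl) auto
    also have "\<dots> = qterm_val s c u e"
      by (simp only: sum_delta_if_conj finite_atMost bb if_True) (simp add: e)
    finally show ?thesis .
  qed
  show ?case
    using Cons d by (simp add: g distrib_right sum.distrib)
qed

definition sqterm_coeffs :: "(nat \<Rightarrow> nat \<Rightarrow> nat \<Rightarrow> bool) \<Rightarrow> sqterm list \<Rightarrow> nat \<Rightarrow> nat \<Rightarrow> nat \<Rightarrow> real" where
  "sqterm_coeffs P L m a b = sum_list (map fst (filter (\<lambda>(k,a',b',m'). a' = a \<and> b' = b \<and> m' = m \<and> P a' b' m') L))"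

lemma sum_sqterm_eq_coeffs:
  assumes "\<forall>(k,a',b',m')\<in>set L. a' \<le> D \<and> b' \<le> D"
  shows "sum_list (map (\<lambda>(k,a',b',m'). if m' = m \<and> P a' b' m' then k * s^a' * c^b' else 0) L) =
    (\<Sum>a\<le>D. \<Sum>b\<le>D. sqterm_coeffs P L m a b * s^a * c^b)"
  using assms
proof (induction L)
  case Nil
  then show ?case by (simp add: sqterm_coeffs_def)
next
  case (Cons e L)
  obtain k a0 b0 m0 where e: "e = (k,a0,b0,m0)" by (cases e) auto
  have g: "sqterm_coeffs P (e # L) m a b = (if m0 = m \<and> P a0 b0 m0 \<and> a = a0 \<and> b = b0 then k else 0) + sqterm_coeffs P L m a b" for a b
    by (auto simp: sqterm_coeffs_def e)
  have bnd: "a0 \<le> D" "b0 \<le> D" using Cons.prems e by auto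
  have d: "(\<Sum>a\<le>D. \<Sum>b\<le>D. (if m0 = m \<and> P a0 b0 m0 \<and> a = a0 \<and> b = b0 then k else 0) * s^a * c^b)
     = (if m0 = m \<and> P a0 b0 m0 then k * s^a0 * c^b0 else 0)"
  proof -
    have bb: "a0 \<in> {..D}" "b0 \<in> {..D}" using bnd by auto
    have "(\<Sum>a\<le>D. \<Sum>b\<le>D. (if m0 = m \<and> P a0 b0 m0 \<and> a = a0 \<and> b = b0 then k else 0) * s^a * c^b)
      = (\<Sum>a\<le>D. \<Sum>b\<le>D. if ((m0 = m \<and> P a0 b0 m0) \<and> a = a0) \<and> b = b0 then k * s^a * c^b else 0)"
      by (intro sum.cong refl) auto
    also have "\<dots> = (if m0 = m \<and> P a0 b0 m0 then k * s^a0 * c^b0 else 0)"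
      by (simp only: sum_delta_if_conj finite_atMost bb)
    finally show ?thesis .
  qed
  show ?case
    using Cons d by (simp add: g[unfolded e] distrib_right sum.distrib e)
qed

lemma has_real_derivative_sum_qterm_val:
  assumes S: "(S has_real_derivative C) (at x)" and U: "\<And>i. ((\<lambda>y. U y i) has_real_derivative U x (Suc i)) (at x)"
  shows "((\<lambda>y. sum_list (map (qterm_val (S y) C (U y)) L)) has_real_derivative deriv_sum (S x) C (U x) L) (at x)"
proof (induction L)
  case Nil
  then show ?case by simp
next
  case (Cons e L)
  obtain k a b i j where e: "e = (k,a,b,i,j)" by (cases e) auto
  have "((\<lambda>y. qterm_val (S y) C (U y) e) has_real_derivative qterm_deriv (S x) C (U x) e) (at x)"
    unfolding e qterm_val.simps qterm_deriv.simps
    by (rule derivative_eq_intros S U refl | simp)+ (simp add: algebra_simps)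
  from DERIV_add[OF this Cons] show ?case by simp
qed

lemma sqterm_coeffs_nonzero:
  "sqterm_coeffs P L m a b \<noteq> 0 \<Longrightarrow> \<exists>k. k \<noteq> 0 \<and> (k,a,b,m) \<in> set L \<and> P a b m"
proof (induction L)
  case Nil
  then show ?case by (simp add: sqterm_coeffs_def)
next
  case (Cons e L)
  obtain k a' b' m' where e: "e = (k,a',b',m')" by (cases e) auto
  show ?case
  proof (cases "sqterm_coeffs P L m a b = 0")
    case True
    then have "sqterm_coeffs P (e # L) m a b = (if a' = a \<and> b' = b \<and> m' = m \<and> P a' b' m' then k else 0)"
      by (auto simp: sqterm_coeffs_def e)
    then show ?thesis using Cons.prems e by (auto split: if_splits)
  next
    case False
    then show ?thesis using Cons.IH by auto
  qed
qed

lemma sq_sum_by_index: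
  assumes "\<forall>e\<in>set L. case e of (k,a,b,m) \<Rightarrow> k \<noteq> 0 \<longrightarrow> m < n"
  shows "sq_sum s c u L = (\<Sum>m<n. sum_list (map (\<lambda>(k,a,b,m'). if m' = m then k * s^a * c^b else 0) L) * (u m)^2)"
  using assms
proof (induction L)
  case Nil
  then show ?case by simp
next
  case (Cons e L)
  obtain k a b m0 where e: "e = (k,a,b,m0)" by (cases e) auto
  have h: "(\<Sum>m<n. (if m0 = m then k * s^a * c^b else 0) * (u m)^2) = sqterm_val s c u e"
  proof (cases "k = 0")
    case True
    have "(\<Sum>m<n. (if m0 = m then k * s^a * c^b else 0) * (u m)^2) = 0"
      by (rule sum.neutral) (simp add: True)
    then show ?thesis by (simp add: e True)
  next
    case False
    then have "m0 < n" using Cons.prems e by auto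
    then show ?thesis by (simp add: e if_zero_mult)
  qed
  show ?case using Cons h by (simp add: e distrib_right sum.distrib)
qed

lemma sqterm_sum_split_top:
  "sum_list (map (\<lambda>(k,a,b,m'). if m' = m then k * s^a * c^b else 0) L)
   = sum_list (map (top_coeff s c E m) L) + sum_list (map (\<lambda>(k,a',b',m'). if m' = m \<and> a' + b' + 2*m' \<noteq> E then k * s^a' * c^b' else 0) L)"
  by (induction L) auto

section \<open>The derivatives of w and l\<close>

lemma dx_Suc: "dx (Suc j) f = partial_x (dx j f)"
  by (simp add: dx_def)

lemma dx_eq_pd: "dx j f = pd (replicate j True) f"
  by (induction j) (auto simp: dx_def)

lemma has_real_derivative_dx:
  assumes "smooth2 w"
  shows "((\<lambda>y. dx j w (t,y)) has_real_derivative dx (Suc j) w (t,y)) (at y)"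
proof -
  have "pd (replicate j True) w differentiable_on UNIV" using assms by (simp add: smooth2_def)
  then have d1: "dx j w differentiable at (t,y)"
    by (simp add: dx_eq_pd differentiable_on_eq_differentiable_at)
  have d0: "(\<lambda>y::real. (t,y)) differentiable at y"
    by (intro derivative_intros)
  have "((dx j w) \<circ> (\<lambda>y. (t,y))) differentiable at y"
    by (rule differentiable_chain_at[OF d0]) (use d1 in simp)
  then have "(\<lambda>y. dx j w (t,y)) differentiable at y" by (simp add: o_def)
  then have "((\<lambda>y. dx j w (t,y)) has_real_derivative deriv (\<lambda>y. dx j w (t,y)) y) (at y)"
    using DERIV_deriv_iff_real_differentiable by blast
  then show ?thesis by (simp add: dx_Suc partial_x_def)
qed

lemma partial_x_ell: "partial_x (ell lam x0 t0 \<beta>) (t,x) = 2 * lam * (x - x0)"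
proof -
  have "((\<lambda>y. lam * ((y - x0)^2 - \<beta> * (t - t0)^2)) has_real_derivative 2 * lam * (x - x0)) (at x)"
    by (auto intro!: derivative_eq_intros simp: algebra_simps)
  then show ?thesis
    by (simp add: partial_x_def ell_def psi_def DERIV_imp_deriv)
qed

lemma partial_x_partial_x_ell: "partial_x (partial_x (ell lam x0 t0 \<beta>)) (t,x) = 2 * lam"
proof -
  have "((\<lambda>y. 2 * lam * (y - x0)) has_real_derivative 2 * lam) (at x)"
    by (auto intro!: derivative_eq_intros)
  moreover have "(\<lambda>y. partial_x (ell lam x0 t0 \<beta>) (t,y)) = (\<lambda>y. 2 * lam * (y - x0))"
    using partial_x_ell by auto
  moreover have "partial_x (partial_x (ell lam x0 t0 \<beta>)) (t,x) = deriv (\<lambda>y. partial_x (ell lam x0 t0 \<beta>) (t,y)) x"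
    unfolding partial_x_def[of "partial_x (ell lam x0 t0 \<beta>)"] by simp
  ultimately show ?thesis
    by (simp add: DERIV_imp_deriv)
qed

section \<open>Binomial identities\<close>

lemma coeff_binomial_power: "coeff ([:1,b:]^r) i = of_nat (r choose i) * (b::real)^i"
proof (cases "i \<le> r")
  case True then show ?thesis by (simp add: coeff_linear_poly_power)
next
  case False
  have "degree ([:1,b:]^r) \<le> r"
    by (rule order.trans[OF degree_power_le]) auto
  then show ?thesis using False by (simp add: coeff_eq_0)
qed

lemma coeff_binomial_even_part:
  "coeff ([:1,1:]^r) i + coeff ([:1,-1:]^r) i = 2 * (if even i then of_nat (r choose i) else (0::real))"
  by (cases "even i") (simp_all add: coeff_binomial_power)

lemma coeff_binomial_odd_part:
  "coeff ([:1,1:]^r) i - coeff ([:1,-1:]^r) i = 2 * (if odd i then of_nat (r choose i) else (0::real))"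
  by (cases "even i") (simp_all add: coeff_binomial_power)

lemma coeff_X_mult: "coeff ([:0,1:] * (p::real poly)) i = (if i = 0 then 0 else coeff p (i-1))"
  by (auto simp: coeff_pCons')

lemma of_nat_mult_choose_Suc:
  "of_nat j * of_nat (Suc r choose j) = (of_nat (Suc r) * (if j = 0 then 0 else of_nat (r choose (j-1))) :: real)"
proof (cases j)
  case (Suc j')
  have "Suc j' * (Suc r choose Suc j') = Suc r * (r choose j')"
    using Suc_times_binomial_eq[of r j'] by (simp add: mult.commute)
  then have "real (Suc j') * real (Suc r choose Suc j') = real (Suc r) * real (r choose j')"
    by (metis of_nat_mult)
  then show ?thesis using Suc by simp
qed simp

text \<open>Twice X times the derivative of the odd (resp. even) part of (1 + X)^(r+1).\<close>

lemma coeff_X_binomial_even_part: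
  "coeff ([:of_nat (Suc r):] * ([:0,1:] * ([:1,1:]^r + [:1,-1:]^r))) i
     = 2 * (if odd i then of_nat i * of_nat (Suc r choose i) else (0::real))"
proof (cases i)
  case (Suc i')
  have "of_nat i * of_nat (Suc r choose i) = (of_nat (Suc r) * of_nat (r choose i') :: real)"
    using of_nat_mult_choose_Suc[of i r] Suc by simp
  then show ?thesis using Suc by (auto simp: coeff_X_mult coeff_binomial_power)
qed simp

lemma coeff_X_binomial_odd_part:
  "coeff ([:of_nat (Suc r):] * ([:0,1:] * ([:1,1:]^r - [:1,-1:]^r))) i
     = 2 * (if even i then of_nat i * of_nat (Suc r choose i) else (0::real))"
proof (cases i)
  case (Suc i')
  have "of_nat i * of_nat (Suc r choose i) = (of_nat (Suc r) * of_nat (r choose i') :: real)"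
    using of_nat_mult_choose_Suc[of i r] Suc by simp
  then show ?thesis using Suc by (auto simp: coeff_X_mult coeff_binomial_power)
qed simp

lemma coeff_one_plus_X2_mult:
  "coeff ([:1,0,1:] * p) i = coeff p i + (if i \<ge> 2 then coeff p (i-2) else (0::real))"
  by (cases i; cases "i-1") (auto simp: coeff_pCons')

lemma coeff_one_minus_X2_mult:
  "coeff ([:1,0,-1:] * p) i = coeff p i - (if i \<ge> 2 then coeff p (i-2) else (0::real))"
  by (cases i; cases "i-1") (auto simp: coeff_pCons')

lemma coeff_one_minus_X2_power:
  "coeff ([:1,0,-1:]^r) i = (if even i then (-1)^(i div 2) * of_nat (r choose (i div 2)) else (0::real))"
proof (induction r arbitrary: i)
  case 0
  then show ?case by (cases i) (auto simp: coeff_pCons')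
next
  case (Suc r)
  have step: "coeff ([:1,0,-1:]^Suc r) i = coeff ([:1,0,-1:]^r) i - (if i \<ge> 2 then coeff ([:1,0,-1:]^r) (i-2) else (0::real))"
    unfolding power_Suc by (rule coeff_one_minus_X2_mult)
  show ?case
  proof (cases "i \<ge> 2")
    case True
    then obtain i' where i': "i = Suc (Suc i')" by (metis add_2_eq_Suc le_Suc_ex)
    show ?thesis
    proof (cases "even i'")
      case True
      then obtain q where q: "i' = 2*q" by auto
      have "i div 2 = Suc q" "(i-2) div 2 = q" using i' q by auto
      then show ?thesis using step Suc i' q by (simp add: algebra_simps)
    next
      case False
      then show ?thesis using step Suc i' by simp
    qed
  next
    case False
    then have "i = 0 \<or> i = 1" by auto
    then show ?thesis using step Suc by auto
  qed
qed

lemma sum_sum_antidiagonal: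
  fixes f g :: "nat \<Rightarrow> real"
  assumes "\<forall>j>n. f j = 0" "\<forall>k>n. g k = 0"
  shows "(\<Sum>j<n+1. \<Sum>k<n+1. if j + k = N then f j * g k else 0) = (\<Sum>i\<le>N. f i * g (N - i))"
proof -
  have inner: "(\<Sum>k<n+1. if j + k = N then f j * g k else 0) = (if j \<le> N then f j * g (N - j) else 0)" for j
  proof (cases "j \<le> N")
    case True
    have "(\<Sum>k<n+1. if j + k = N then f j * g k else 0) = (\<Sum>k<n+1. if k = N - j then f j * g k else 0)"
      using True by (intro sum.cong) auto
    also have "\<dots> = (if N - j < n + 1 then f j * g (N - j) else 0)" by simp
    also have "\<dots> = f j * g (N - j)" using assms(2) by auto
    finally show ?thesis using True by simp
  qed auto
  have "(\<Sum>j<n+1. \<Sum>k<n+1. if j + k = N then f j * g k else 0) = (\<Sum>j<n+1. if j \<le> N then f j * g (N - j) else 0)"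
    using inner by simp
  also have "\<dots> = (\<Sum>j\<in>{..<n+1} \<union> {..N}. if j \<le> N then f j * g (N - j) else 0)"
    by (rule sum.mono_neutral_left) (use assms(1) in auto)
  also have "\<dots> = (\<Sum>j\<le>N. if j \<le> N then f j * g (N - j) else 0)"
    by (rule sum.mono_neutral_right) (use assms(1) in auto)
  also have "\<dots> = (\<Sum>i\<le>N. f i * g (N - i))" by simp
  finally show ?thesis .
qed

lemma sum_antidiagonal_diff_eq_coeff:
  fixes A1 A2 B1 B2 :: "real poly"
  assumes "\<And>i. coeff A1 i = 2 * f1 i" "\<And>i. coeff B1 i = 2 * g1 i"
    and "\<And>i. coeff A2 i = 2 * f2 i" "\<And>i. coeff B2 i = 2 * g2 i"
    and "\<forall>j>n. f1 j = 0" "\<forall>k>n. g1 k = 0" "\<forall>j>n. f2 j = 0" "\<forall>k>n. g2 k = 0"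
  shows "(\<Sum>j<n+1. \<Sum>k<n+1. (if j + k = N then f1 j * g1 k else 0) - (if j + k = N then f2 j * g2 k else 0))
    = coeff (A1 * B1 - A2 * B2) N / 4"
proof -
  have "(\<Sum>j<n+1. \<Sum>k<n+1. if j + k = N then f j * g k else 0) = coeff (A * B) N / 4"
    if "\<And>i. coeff A i = 2 * f i" "\<And>i. coeff B i = 2 * g i" "\<forall>j>n. f j = 0" "\<forall>k>n. g k = 0"
    for A B :: "real poly" and f g
    by (subst sum_sum_antidiagonal[OF that(3,4)]) (simp add: coeff_mult that(1,2) sum_divide_distrib)
  from this[OF assms(1,2,5,6)] this[OF assms(3,4,7,8)] show ?thesis
    by (simp add: sum_subtractf diff_divide_distrib)
qed

lemma binomial_parts_product_odd:
  "[:of_nat (Suc r):] * ([:0,1:] * ([:1,1:]^r + [:1,-1:]^r)) * ([:1,1:]^Suc r + [:1,-1:]^Suc r)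
   - ([:1,1:]^Suc r - [:1,-1:]^Suc r) * ([:of_nat (Suc r):] * ([:0,1:] * ([:1,1:]^r - [:1,-1:]^r)))
   = smult (4 * of_nat (Suc r)) ([:0,1:] * [:1,0,-1:]^r :: real poly)"
proof -
  define P :: "real poly" where "P = [:1,1:]"
  define M :: "real poly" where "M = [:1,-1:]"
  have "[:of_nat (Suc r):] * ([:0,1:] * (P^r + M^r)) * (P^Suc r + M^Suc r)
      - (P^Suc r - M^Suc r) * ([:of_nat (Suc r):] * ([:0,1:] * (P^r - M^r)))
      = [:of_nat (Suc r):] * [:0,1:] * (P^r * M^r) * 2 * (P + M)"
    unfolding power_Suc by algebra
  also have "P^r * M^r = [:1,0,-1:]^r" by (simp add: P_def M_def power_mult_distrib[symmetric])
  also have "P + M = [:2:]" by (simp add: P_def M_def)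
  finally show ?thesis unfolding P_def M_def by (simp add: algebra_simps numeral_poly)
qed

lemma binomial_parts_product_even:
  "([:1,1:]^r + [:1,-1:]^r) * ([:1,1:]^Suc (Suc r) + [:1,-1:]^Suc (Suc r))
   - ([:1,1:]^Suc (Suc r) - [:1,-1:]^Suc (Suc r)) * ([:1,1:]^r - [:1,-1:]^r)
   = smult 4 ([:1,0,1:] * [:1,0,-1:]^r :: real poly)"
proof -
  define P :: "real poly" where "P = [:1,1:]"
  define M :: "real poly" where "M = [:1,-1:]"
  have "(P^r + M^r) * (P^Suc (Suc r) + M^Suc (Suc r)) - (P^Suc (Suc r) - M^Suc (Suc r)) * (P^r - M^r)
      = (P^r * M^r) * 2 * (P * P + M * M)"
    unfolding power_Suc by algebra
  also have "P^r * M^r = [:1,0,-1:]^r" by (simp add: P_def M_def power_mult_distrib[symmetric])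
  also have "P * P + M * M = [:2,0,2:]" by (simp add: P_def M_def)
  finally show ?thesis unfolding P_def M_def by (simp add: algebra_simps numeral_poly smult_add_right)
qed

text \<open>With O and E the odd and even parts of (1 + X)^n, the sum is (-1)^m times the
  coefficient of X^(2m+1) in X (O' E - O E') = n X (1 - X^2)^(n-1).\<close>

lemma sum_choose_odd_even:
  assumes "n \<ge> 1"
  shows "(\<Sum>j<n+1. \<Sum>k<n+1. if odd j \<and> even k \<and> j + k = 2*m+1
            then of_nat (n choose j) * of_nat (n choose k) * (-1)^(k+m) * (of_nat j - of_nat k) else 0)
         = of_nat n * (of_nat ((n-1) choose m) :: real)"
proof -
  obtain r where n: "n = Suc r" using assms by (cases n) auto
  define N where "N = 2*m+1"
  define f1 where "f1 j = (if odd j then of_nat j * of_nat (n choose j) else (0::real))" for j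
  define g1 where "g1 k = (if even k then of_nat (n choose k) else (0::real))" for k
  define f2 where "f2 j = (if odd j then of_nat (n choose j) else (0::real))" for j
  define g2 where "g2 k = (if even k then of_nat k * of_nat (n choose k) else (0::real))" for k
  define A1 :: "real poly" where "A1 = [:of_nat n:] * ([:0,1:] * ([:1,1:]^r + [:1,-1:]^r))"
  define A2 :: "real poly" where "A2 = [:1,1:]^n - [:1,-1:]^n"
  define B1 :: "real poly" where "B1 = [:1,1:]^n + [:1,-1:]^n"
  define B2 :: "real poly" where "B2 = [:of_nat n:] * ([:0,1:] * ([:1,1:]^r - [:1,-1:]^r))"
  have coeffs: "coeff A1 i = 2 * f1 i" "coeff B1 i = 2 * g1 i" "coeff A2 i = 2 * f2 i" "coeff B2 i = 2 * g2 i" for i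
    unfolding A1_def B1_def A2_def B2_def f1_def g1_def f2_def g2_def n coeff_add coeff_diff
    by (rule coeff_X_binomial_even_part coeff_binomial_even_part coeff_binomial_odd_part
        coeff_X_binomial_odd_part)+
  have vanish: "\<forall>j>n. f1 j = 0" "\<forall>k>n. g1 k = 0" "\<forall>j>n. f2 j = 0" "\<forall>k>n. g2 k = 0"
    by (simp_all add: f1_def g1_def f2_def g2_def)
  have top: "coeff (A1 * B1 - A2 * B2) N = 4 * of_nat n * (-1)^m * of_nat (r choose m)"
    using binomial_parts_product_odd[of r]
    by (simp add: A1_def A2_def B1_def B2_def n N_def coeff_X_mult coeff_one_minus_X2_power)
  have summand: "(if odd j \<and> even k \<and> j + k = N
            then of_nat (n choose j) * of_nat (n choose k) * (-1)^(k+m) * (of_nat j - of_nat k) else 0)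
     = (-1)^m * ((if j + k = N then f1 j * g1 k else 0) - (if j + k = N then f2 j * g2 k else 0))" for j k
    by (cases "j + k = N") (auto simp: N_def f1_def g1_def f2_def g2_def power_add algebra_simps)
  have "(\<Sum>j<n+1. \<Sum>k<n+1. if odd j \<and> even k \<and> j + k = N
            then of_nat (n choose j) * of_nat (n choose k) * (-1)^(k+m) * (of_nat j - of_nat k) else 0)
      = (-1)^m * (4 * of_nat n * (-1)^m * of_nat (r choose m) / (4::real))"
    unfolding summand sum_distrib_left[symmetric] sum_antidiagonal_diff_eq_coeff[OF coeffs vanish] top ..
  also have "\<dots> = of_nat n * of_nat (r choose m)"
    by (simp add: power_add[symmetric] power_mult_distrib[symmetric] mult.assoc[symmetric])
  finally show ?thesis unfolding N_def n by simp
qed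

text \<open>Likewise, with E_r and O_r the even and odd parts of (1 + X)^r, the sum is (-1)^m times
  the coefficient of X^(2m) in E_(n-2) E_n - O_n O_(n-2) = (1 + X^2) (1 - X^2)^(n-2).\<close>

lemma sum_choose_n_minus_2:
  assumes "n \<ge> 2"
  shows "(\<Sum>j<n+1. \<Sum>k<n+1.
      (if odd j \<and> odd k \<and> k \<le> n-2 \<and> j + k = 2*m then of_nat (n choose j) * of_nat ((n-2) choose k) * (-1)^(m+k) else 0)
    + (if even j \<and> j \<le> n-2 \<and> even k \<and> j + k = 2*m then of_nat ((n-2) choose j) * of_nat (n choose k) * (-1)^(m+k) else 0))
    = of_nat ((n-2) choose m) - (if m = 0 then 0 else (of_nat ((n-2) choose (m-1)) :: real))"
proof -
  obtain r where n: "n = Suc (Suc r)" using assms by (metis add_2_eq_Suc le_Suc_ex)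
  have r: "n - 2 = r" using n by simp
  define N where "N = 2*m"
  define f3 where "f3 j = (if even j then of_nat (r choose j) else (0::real))" for j
  define g3 where "g3 k = (if even k then of_nat (n choose k) else (0::real))" for k
  define f4 where "f4 j = (if odd j then of_nat (n choose j) else (0::real))" for j
  define g4 where "g4 k = (if odd k then of_nat (r choose k) else (0::real))" for k
  define A3 :: "real poly" where "A3 = [:1,1:]^r + [:1,-1:]^r"
  define A4 :: "real poly" where "A4 = [:1,1:]^n - [:1,-1:]^n"
  define B3 :: "real poly" where "B3 = [:1,1:]^n + [:1,-1:]^n"
  define B4 :: "real poly" where "B4 = [:1,1:]^r - [:1,-1:]^r"
  have coeffs: "coeff A3 i = 2 * f3 i" "coeff B3 i = 2 * g3 i" "coeff A4 i = 2 * f4 i" "coeff B4 i = 2 * g4 i" for i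
    unfolding A3_def B3_def A4_def B4_def f3_def g3_def f4_def g4_def coeff_add coeff_diff
    by (rule coeff_binomial_even_part coeff_binomial_odd_part)+
  have vanish: "\<forall>j>n. f3 j = 0" "\<forall>k>n. g3 k = 0" "\<forall>j>n. f4 j = 0" "\<forall>k>n. g4 k = 0"
    by (simp_all add: f3_def g3_def f4_def g4_def n)
  have top: "coeff (A3 * B3 - A4 * B4) N = 4 * ((-1)^m * of_nat (r choose m)
        + (if m = 0 then 0 else (-1)^(m-1) * of_nat (r choose (m-1))))"
    using binomial_parts_product_even[of r] coeff_one_plus_X2_mult[of "[:1,0,-1:]^r" N]
    by (cases m) (simp_all add: A3_def A4_def B3_def B4_def n N_def coeff_one_minus_X2_power)
  have summand: "(if odd j \<and> odd k \<and> k \<le> n-2 \<and> j + k = N then of_nat (n choose j) * of_nat ((n-2) choose k) * (-1)^(m+k) else 0)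
    + (if even j \<and> j \<le> n-2 \<and> even k \<and> j + k = N then of_nat ((n-2) choose j) * of_nat (n choose k) * (-1)^(m+k) else 0)
     = (-1)^m * ((if j + k = N then f3 j * g3 k else 0) - (if j + k = N then f4 j * g4 k else 0))" for j k
    by (cases "j + k = N"; cases "even j")
      (auto simp: N_def f3_def g3_def f4_def g4_def power_add binomial_eq_0 r)
  have "(\<Sum>j<n+1. \<Sum>k<n+1.
      (if odd j \<and> odd k \<and> k \<le> n-2 \<and> j + k = N then of_nat (n choose j) * of_nat ((n-2) choose k) * (-1)^(m+k) else 0)
    + (if even j \<and> j \<le> n-2 \<and> even k \<and> j + k = N then of_nat ((n-2) choose j) * of_nat (n choose k) * (-1)^(m+k) else 0))
     = (-1)^m * (4 * ((-1)^m * of_nat (r choose m)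
        + (if m = 0 then 0 else (-1)^(m-1) * of_nat (r choose (m-1)))) / (4::real))"
    unfolding summand sum_distrib_left[symmetric] sum_antidiagonal_diff_eq_coeff[OF coeffs vanish] top ..
  then show ?thesis
    unfolding N_def r by (cases m) (simp_all add: field_simps)
qed

section \<open>I1 I2 as a sum of quadratic terms\<close>

definition I1_coeff :: "nat \<Rightarrow> real \<Rightarrow> real \<Rightarrow> nat \<Rightarrow> real" where
  "I1_coeff n s c j = (if odd j then of_nat (n choose j) * (-1)^(n-j) * s^(n-j) else 0)
     - of_nat (n choose 2) * c * (if even j \<and> j \<le> n-2 then of_nat ((n-2) choose j) * (-1)^(n-2-j) * s^(n-2-j) else 0)"
definition I2_coeff :: "nat \<Rightarrow> real \<Rightarrow> real \<Rightarrow> nat \<Rightarrow> real" where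
  "I2_coeff n s c j = (if even j then of_nat (n choose j) * (-1)^(n-j) * s^(n-j) else 0)
     - of_nat (n choose 2) * c * (if odd j \<and> j \<le> n-2 then of_nat ((n-2) choose j) * (-1)^(n-2-j) * s^(n-2-j) else 0)"

lemma sum_filter_le: "M \<le> N \<Longrightarrow> (\<Sum>j\<in>{j. j \<le> (M::nat) \<and> P j}. f j) = (\<Sum>j<N+1. if P j \<and> j \<le> M then f j else (0::real))"
proof -
  assume "M \<le> N"
  then have "{j. j \<le> M \<and> P j} = {j \<in> {..<N+1}. P j \<and> j \<le> M}" by auto
  then show ?thesis by (simp only: sum.inter_filter[OF finite_lessThan])
qed

lemma I1_eq_coeff_sum: "n \<ge> 2 \<Longrightarrow> I1 n l w p = (\<Sum>j<n+1. I1_coeff n (partial_x l p) (partial_x (partial_x l) p) j * dx j w p)"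
proof -
  assume n: "n \<ge> 2"
  let ?s = "partial_x l p" and ?c = "partial_x (partial_x l) p"
  have t: "(if odd j \<and> j \<le> n then of_nat (n choose j) * (-1)^(n-j) * ?s^(n-j) * dx j w p else 0)
     - of_nat (n choose 2) * ?c * (if even j \<and> j \<le> n-2 then of_nat ((n-2) choose j) * (-1)^(n-2-j) * ?s^(n-2-j) * dx j w p else 0)
     = I1_coeff n ?s ?c j * dx j w p" if "j < n+1" for j
    using that by (auto simp: I1_coeff_def algebra_simps)
  show ?thesis
    unfolding I1_def sum_filter_le[where M=n and N=n, OF order.refl] sum_filter_le[where M="n-2" and N=n, OF diff_le_self] sum_distrib_left sum_subtractf[symmetric]
    using n t by (intro sum.cong) auto
qed

lemma I2_eq_coeff_sum: "n \<ge> 2 \<Longrightarrow> I2 n l w p = (\<Sum>j<n+1. I2_coeff n (partial_x l p) (partial_x (partial_x l) p) j * dx j w p)"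
proof -
  assume n: "n \<ge> 2"
  let ?s = "partial_x l p" and ?c = "partial_x (partial_x l) p"
  have t: "(if even j \<and> j \<le> n then of_nat (n choose j) * (-1)^(n-j) * ?s^(n-j) * dx j w p else 0)
     - of_nat (n choose 2) * ?c * (if odd j \<and> j \<le> n-2 then of_nat ((n-2) choose j) * (-1)^(n-2-j) * ?s^(n-2-j) * dx j w p else 0)
     = I2_coeff n ?s ?c j * dx j w p" if "j < n+1" for j
    using that by (auto simp: I2_coeff_def algebra_simps)
  show ?thesis
    unfolding I2_def sum_filter_le[where M=n and N=n, OF order.refl] sum_filter_le[where M="n-2" and N=n, OF diff_le_self] sum_distrib_left sum_subtractf[symmetric]
    using n t by (intro sum.cong) auto
qed

text \<open>prod_coeff_xy is the coefficient of the product of part x of I1 and part y of I2, where m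
  is the binomial sum and c the l_xx correction.\<close>

definition prod_coeff_mm :: "nat \<Rightarrow> nat \<Rightarrow> nat \<Rightarrow> real" where
  "prod_coeff_mm n j k = (if odd j \<and> even k then of_nat (n choose j) * (-1)^(n-j) * (of_nat (n choose k) * (-1)^(n-k)) else 0)"
definition prod_coeff_mc :: "nat \<Rightarrow> nat \<Rightarrow> nat \<Rightarrow> real" where
  "prod_coeff_mc n j k = (if odd j \<and> odd k \<and> k \<le> n-2 then - (of_nat (n choose 2) * (of_nat (n choose j) * (-1)^(n-j)) * (of_nat ((n-2) choose k) * (-1)^(n-2-k))) else 0)"
definition prod_coeff_cm :: "nat \<Rightarrow> nat \<Rightarrow> nat \<Rightarrow> real" where
  "prod_coeff_cm n j k = (if even j \<and> j \<le> n-2 \<and> even k then - (of_nat (n choose 2) * (of_nat ((n-2) choose j) * (-1)^(n-2-j)) * (of_nat (n choose k) * (-1)^(n-k))) else 0)"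
definition prod_coeff_cc :: "nat \<Rightarrow> nat \<Rightarrow> nat \<Rightarrow> real" where
  "prod_coeff_cc n j k = (if even j \<and> j \<le> n-2 \<and> odd k \<and> k \<le> n-2 then (of_nat (n choose 2) * (of_nat ((n-2) choose j) * (-1)^(n-2-j))) * (of_nat (n choose 2) * (of_nat ((n-2) choose k) * (-1)^(n-2-k))) else 0)"

definition I12_qterms_at :: "nat \<Rightarrow> nat \<Rightarrow> nat \<Rightarrow> qterm list" where
  "I12_qterms_at n j k = [(prod_coeff_mm n j k, (n-j)+(n-k), 0, j, k), (prod_coeff_mc n j k, (n-j)+(n-2-k), 1, j, k),
                  (prod_coeff_cm n j k, (n-2-j)+(n-k), 1, j, k), (prod_coeff_cc n j k, (n-2-j)+(n-2-k), 2, j, k)]"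

definition I12_qterms :: "nat \<Rightarrow> qterm list" where
  "I12_qterms n = concat (map (\<lambda>j. concat (map (\<lambda>k. I12_qterms_at n j k) [0..<n+1])) [0..<n+1])"

lemma I_coeff_mult: "I1_coeff n s c j * u j * (I2_coeff n s c k * u k) = sum_list (map (qterm_val s c u) (I12_qterms_at n j k))"
  by (auto simp: I1_coeff_def I2_coeff_def I12_qterms_at_def prod_coeff_mm_def prod_coeff_mc_def prod_coeff_cm_def prod_coeff_cc_def power_add power2_eq_square algebra_simps)

lemma sum_list_I12_qterms: "sum_list (map F (I12_qterms n)) = (\<Sum>j<n+1. \<Sum>k<n+1. sum_list (map F (I12_qterms_at n j k)))"
  unfolding I12_qterms_def by (simp only: sum_list_map_concat map_map o_def interv_sum_list_conv_sum_set_nat set_upt atLeast0LessThan)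

lemma I1_times_I2: "n \<ge> 2 \<Longrightarrow> I1 n l w p * I2 n l w p = sum_list (map (qterm_val (partial_x l p) (partial_x (partial_x l) p) (\<lambda>i. dx i w p)) (I12_qterms n))"
  unfolding I1_eq_coeff_sum I2_eq_coeff_sum sum_list_I12_qterms sum_product
  by (intro sum.cong refl) (rule I_coeff_mult[where u="\<lambda>i. dx i w p", simplified])

section \<open>The squares of order 2n - 1\<close>

lemma min_plus_half_diff: "min (j::nat) k + (max j k - min j k) div 2 = (j + k) div 2"
proof (cases rule: min_max_cases[of j k])
  case (le d)
  show ?thesis unfolding le(1,2) le(3) by presburger
next
  case (gt d)
  show ?thesis unfolding gt(1,2) gt(3) by presburger
qed

lemma even_max_minus_min: "even (max (j::nat) k - min j k) \<longleftrightarrow> even (j + k)"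
proof (cases rule: min_max_cases[of j k])
  case (le d)
  show ?thesis unfolding le(2) le(3) by presburger
next
  case (gt d)
  show ?thesis unfolding gt(2) gt(3) by presburger
qed

lemma minus_one_power_shift: "x = 2*y + z \<Longrightarrow> (-1::real)^x = (-1)^z"
  by (simp add: power_add power_mult)

lemma minus_one_power_odd_diff:
  assumes "j + k = 2*m+1"
  shows "(-1::real)^((max j k - min j k) div 2) * real (max j k - min j k) = (-1)^(k+m) * (real j - real k)"
proof (cases rule: min_max_cases[of j k])
  case (le d)
  have "odd d" using le(3) assms by presburger
  then obtain q where q: "d = 2*q+1" using oddE by blast
  have m: "m = j + q" using q le(3) assms by arith
  have "(-1::real)^(k+m) = (-1)^(q+1)" by (rule minus_one_power_shift[of _ "j+q"]) (use q le(3) m in arith)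
  then show ?thesis unfolding le(2) using q le(3) by (simp add: algebra_simps)
next
  case (gt d)
  have "odd d" using gt(3) assms by presburger
  then obtain q where q: "d = 2*q+1" using oddE by blast
  have m: "m = k + q" using q gt(3) assms by arith
  have "(-1::real)^(k+m) = (-1)^q" by (rule minus_one_power_shift[of _ "k"]) (use q gt(3) m in arith)
  then show ?thesis unfolding gt(2) using q gt(3) by simp
qed

lemma minus_one_power_even_diff:
  assumes "j + k = 2*(m::nat)"
  shows "(-1::real)^((max j k - min j k) div 2) = (-1)^(m+k)"
proof (cases rule: min_max_cases[of j k])
  case (le d)
  have "even d" using le(3) assms by presburger
  then obtain q where q: "d = 2*q" by blast
  have m: "m = j + q" using q le(3) assms by arith
  have "(-1::real)^(m+k) = (-1)^q" by (rule minus_one_power_shift[of _ "j+q"]) (use q le(3) m in arith)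
  then show ?thesis unfolding le(2) using q by simp
next
  case (gt d)
  have "even d" using gt(3) assms by presburger
  then obtain q where q: "d = 2*q" by blast
  have m: "m = k + q" using q gt(3) assms by arith
  have "(-1::real)^(m+k) = (-1)^q" by (rule minus_one_power_shift[of _ "k"]) (use q gt(3) m in arith)
  then show ?thesis unfolding gt(2) using q by simp
qed

lemma ibp_top_coeff_odd_pair:
  assumes "i = min j k" "d = max j k - min j k" "odd (j + k)"
  shows "ibp_top_coeff s c k0 a b i d m
     = (if j + k = 2*m+1 then k0 * (-1)^(k+m) * (real k - real j) / 2 * of_nat a * s^(a-1) * c^(b+1) else 0)"
proof (cases "j + k = 2*m+1")
  case True
  have "odd d" using assms(2,3) even_max_minus_min by blast
  moreover have "m = i + d div 2" unfolding assms(1,2) min_plus_half_diff using True by presburger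
  ultimately have "ibp_top_coeff s c k0 a b i d m = - k0 * ((-1)^(d div 2) * real d) / 2 * of_nat a * s^(a-1) * c^(b+1)"
    by (simp add: ibp_top_coeff_def)
  also have "\<dots> = - k0 * ((-1)^(k+m) * (real j - real k)) / 2 * of_nat a * s^(a-1) * c^(b+1)"
    unfolding assms(2) minus_one_power_odd_diff[OF True] ..
  finally show ?thesis using True by (simp add: algebra_simps)
next
  case False
  then have "m \<noteq> i + d div 2" unfolding assms(1,2) min_plus_half_diff using assms(3) by presburger
  then show ?thesis using False by (simp add: ibp_top_coeff_def)
qed

lemma ibp_top_coeff_even_pair:
  assumes "i = min j k" "d = max j k - min j k" "even (j + k)"
  shows "ibp_top_coeff s c k0 a b i d m = (if j + k = 2*m then k0 * (-1)^(m+k) * s^a * c^b else 0)"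
proof (cases "j + k = 2*m")
  case True
  have "even d" using assms(2,3) even_max_minus_min by blast
  moreover have "m = i + d div 2" unfolding assms(1,2) min_plus_half_diff using True by presburger
  ultimately show ?thesis
    using True minus_one_power_even_diff[OF True] assms(2) by (simp add: ibp_top_coeff_def)
next
  case False
  then have "m \<noteq> i + d div 2" unfolding assms(1,2) min_plus_half_diff using assms(3) by presburger
  then show ?thesis using False by (simp add: ibp_top_coeff_def)
qed

lemma qterm_top_coeff_mm:
  assumes "j \<le> n" "k \<le> n"
  shows "qterm_top_coeff (2*n-1) s c m (prod_coeff_mm n j k, (n-j)+(n-k), 0, j, k) =
    (if odd j \<and> even k \<and> j + k = 2*m+1 then of_nat (n choose j) * of_nat (n choose k) * (-1)^(k+m) * (of_nat j - of_nat k)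
        * ((2 * of_nat n - 2 * of_nat m - 1)/2 * (s^(2*n-2*m-2) * c)) else 0)"
proof (cases "odd j \<and> even k")
  case False
  then have "prod_coeff_mm n j k = 0" by (auto simp: prod_coeff_mm_def)
  then show ?thesis using False by (auto simp: qterm_top_coeff_def ibp_top_coeff_zero)
next
  case True
  then have odd_jk: "odd (j + k)" and "(j + k) mod 2 = 1" by presburger+
  then have order: "2*n-1 = qterm_order (prod_coeff_mm n j k, (n-j)+(n-k), 0, j, k)"
    using assms by (simp add: qterm_order_def)
  have "odd ((n-j)+(n-k))" using odd_jk assms by presburger
  then have "(-1::real)^(n-j) * (-1)^(n-k) = -1" by (simp add: power_add[symmetric])
  then have coeff: "prod_coeff_mm n j k = - (of_nat (n choose j) * of_nat (n choose k))"
    using True unfolding prod_coeff_mm_def by (simp add: algebra_simps)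
  show ?thesis
  proof (cases "j + k = 2*m+1")
    case eq: True
    define a where "a = (n-j)+(n-k)"
    have a: "a - 1 = 2*n-2*m-2" "real a = 2 * real n - 2 * real m - 1"
      using eq assms unfolding a_def by auto
    have "qterm_top_coeff (2*n-1) s c m (prod_coeff_mm n j k, a, 0, j, k)
        = - (of_nat (n choose j) * of_nat (n choose k)) * (-1)^(k+m) * (real k - real j) / 2 * real a * s^(a-1) * c"
      using order eq unfolding qterm_top_coeff_def a_def
      by (simp add: ibp_top_coeff_odd_pair[OF refl refl odd_jk] coeff)
    then show ?thesis unfolding a_def[symmetric] a using True eq by (simp add: algebra_simps)
  next
    case False
    then show ?thesis unfolding qterm_top_coeff_def using order
      by (simp add: ibp_top_coeff_odd_pair[OF refl refl odd_jk])
  qed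
qed

lemma qterm_top_coeff_c_linear:
  assumes "j + k + a = 2*n - 2" "even (j+k)" "n \<ge> 1"
  shows "qterm_top_coeff (2*n-1) s c m (cf, a, 1, j, k) = (if j + k = 2*m then cf * (-1)^(m+k) * (s^(2*n-2*m-2) * c) else 0)"
proof -
  have "(j+k) mod 2 = 0" using assms(2) by presburger
  then have "2*n-1 = qterm_order (cf, a, 1, j, k)"
    using assms by (simp add: qterm_order_def)
  moreover have "a = 2*n-2*m-2" if "j + k = 2*m" using that assms by auto
  ultimately show ?thesis unfolding qterm_top_coeff_def
    by (auto simp: ibp_top_coeff_even_pair[OF refl refl assms(2)])
qed

lemma qterm_top_coeff_mc:
  assumes "j \<le> n" "k \<le> n" "n \<ge> 2"
  shows "qterm_top_coeff (2*n-1) s c m (prod_coeff_mc n j k, (n-j)+(n-2-k), 1, j, k) =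
    (if odd j \<and> odd k \<and> k \<le> n-2 \<and> j + k = 2*m then of_nat (n choose j) * of_nat ((n-2) choose k) * (-1)^(m+k) else 0)
      * (- of_nat (n choose 2) * (s^(2*n-2*m-2) * c))"
proof (cases "odd j \<and> odd k \<and> k \<le> n-2")
  case False
  then have "prod_coeff_mc n j k = 0" by (auto simp: prod_coeff_mc_def)
  then show ?thesis using False by (auto simp: qterm_top_coeff_def ibp_top_coeff_zero)
next
  case True
  have e: "even (j+k)" using True by simp
  have sg: "(-1::real)^(n-j) * (-1)^(n-2-k) = 1"
  proof -
    have "(-1::real)^(n-j) * (-1)^(n-2-k) = (-1)^((n-j)+(n-2-k))" by (simp add: power_add)
    also have "\<dots> = 1" using e True assms by (simp add: minus_one_power_iff) presburger
    finally show ?thesis .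
  qed
  have cf: "prod_coeff_mc n j k = - (of_nat (n choose 2) * of_nat (n choose j) * of_nat ((n-2) choose k))"
    using True sg unfolding prod_coeff_mc_def by (simp add: algebra_simps)
  have T: "qterm_top_coeff (2*n-1) s c m (prod_coeff_mc n j k, (n-j)+(n-2-k), 1, j, k) = (if j + k = 2*m then prod_coeff_mc n j k * (-1)^(m+k) * (s^(2*n-2*m-2) * c) else 0)"
    by (rule qterm_top_coeff_c_linear) (use True assms e in auto)
  show ?thesis unfolding T unfolding cf using True by (simp add: algebra_simps)
qed

lemma qterm_top_coeff_cm:
  assumes "j \<le> n" "k \<le> n" "n \<ge> 2"
  shows "qterm_top_coeff (2*n-1) s c m (prod_coeff_cm n j k, (n-2-j)+(n-k), 1, j, k) =
    (if even j \<and> j \<le> n-2 \<and> even k \<and> j + k = 2*m then of_nat ((n-2) choose j) * of_nat (n choose k) * (-1)^(m+k) else 0)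
      * (- of_nat (n choose 2) * (s^(2*n-2*m-2) * c))"
proof (cases "even j \<and> j \<le> n-2 \<and> even k")
  case False
  then have "prod_coeff_cm n j k = 0" by (auto simp: prod_coeff_cm_def)
  then show ?thesis using False by (auto simp: qterm_top_coeff_def ibp_top_coeff_zero)
next
  case True
  have e: "even (j+k)" using True by simp
  have sg: "(-1::real)^(n-2-j) * (-1)^(n-k) = 1"
  proof -
    have "(-1::real)^(n-2-j) * (-1)^(n-k) = (-1)^((n-2-j)+(n-k))" by (simp add: power_add)
    also have "\<dots> = 1" using e True assms by (simp add: minus_one_power_iff) presburger
    finally show ?thesis .
  qed
  have cf: "prod_coeff_cm n j k = - (of_nat (n choose 2) * of_nat ((n-2) choose j) * of_nat (n choose k))"
    using True sg unfolding prod_coeff_cm_def by (simp add: algebra_simps)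
  have T: "qterm_top_coeff (2*n-1) s c m (prod_coeff_cm n j k, (n-2-j)+(n-k), 1, j, k) = (if j + k = 2*m then prod_coeff_cm n j k * (-1)^(m+k) * (s^(2*n-2*m-2) * c) else 0)"
    by (rule qterm_top_coeff_c_linear) (use True assms e in auto)
  show ?thesis unfolding T unfolding cf using True by (simp add: algebra_simps)
qed

lemma qterm_top_coeff_cc:
  assumes "j \<le> n" "k \<le> n" "n \<ge> 2"
  shows "qterm_top_coeff (2*n-1) s c m (prod_coeff_cc n j k, (n-2-j)+(n-2-k), 2, j, k) = 0"
proof (cases "even j \<and> j \<le> n-2 \<and> odd k \<and> k \<le> n-2")
  case False
  then have "prod_coeff_cc n j k = 0" by (auto simp: prod_coeff_cc_def)
  then show ?thesis using False by (auto simp: qterm_top_coeff_def ibp_top_coeff_zero)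
next
  case True
  have "(j+k) mod 2 = 1" using True by presburger
  then have "qterm_order (prod_coeff_cc n j k, (n-2-j)+(n-2-k), 2, j, k) = 2*n-3"
    using True assms by (simp add: qterm_order_def; linarith)
  then show ?thesis using assms by (simp add: qterm_top_coeff_def)
qed

lemma of_nat_choose_two: "real (Suc (Suc r) choose 2) * 2 = real (Suc (Suc r)) * real (Suc r)"
proof -
  have "Suc (Suc r) * (Suc r choose 1) = (Suc (Suc r) choose 2) * 2"
    using Suc_times_binomial_eq[of "Suc r" 1] by (simp add: numeral_2_eq_2)
  then show ?thesis by (metis choose_one of_nat_mult of_nat_numeral)
qed

lemma of_nat_Suc_mult_choose:
  assumes "m \<le> Suc r"
  shows "real (Suc r) * real (r choose m) = (real (Suc r) - real m) * real (Suc r choose m)"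
proof -
  have "(Suc r - m) * (Suc r choose m) = Suc r * (r choose m)"
    using binomial_absorb_comp[of "Suc r" m] by simp
  then have "real (Suc r - m) * real (Suc r choose m) = real (Suc r) * real (r choose m)"
    by (metis of_nat_mult)
  then show ?thesis using assms by (simp add: of_nat_diff)
qed

lemma of_nat_Suc_mult_choose_pred:
  "real (Suc r) * (if m = 0 then 0 else real (r choose (m-1))) = real m * real (Suc r choose m)"
proof (cases m)
  case (Suc m')
  have "Suc r * (r choose m') = (Suc r choose Suc m') * Suc m'" by (rule Suc_times_binomial_eq)
  then have "real (Suc r) * real (r choose m') = real (Suc r choose Suc m') * real (Suc m')"
    by (metis of_nat_mult)
  then show ?thesis using Suc by simp
qed simp

lemma choose_two_mult_choose_diff:
  assumes "m \<le> Suc r"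
  shows "real (Suc (Suc r) choose 2) * (real (r choose m) - (if m = 0 then 0 else real (r choose (m-1))))
      = real (Suc (Suc r)) / 2 * ((real (Suc r) - 2 * real m) * real (Suc r choose m))"
proof -
  have "real (Suc (Suc r) choose 2) * (real (r choose m) - (if m = 0 then 0 else real (r choose (m-1))))
     = real (Suc (Suc r)) / 2
       * (real (Suc r) * real (r choose m) - real (Suc r) * (if m = 0 then 0 else real (r choose (m-1))))"
  proof -
    have choose_two: "real (Suc (Suc r) choose 2) = real (Suc (Suc r)) * real (Suc r) / 2"
      using of_nat_choose_two[of r] by simp
    show ?thesis unfolding choose_two by (simp add: field_simps)
  qed
  also have "\<dots> = real (Suc (Suc r)) / 2 * ((real (Suc r) - 2 * real m) * real (Suc r choose m))"
    unfolding of_nat_Suc_mult_choose[OF assms] of_nat_Suc_mult_choose_pred by (simp add: algebra_simps)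
  finally show ?thesis .
qed

text \<open>The coefficient of s^(2n-2m-2) c u_m^2 collected from the mm terms (first summand) and
  from the mc and cm terms (second summand).\<close>

lemma top_coeff_binomial_identity:
  assumes "n \<ge> 2" "m < n"
  shows "(2 * of_nat n - 2 * of_nat m - 1)/2 * (of_nat n * of_nat ((n-1) choose m))
     + (- of_nat (n choose 2)) * (of_nat ((n-2) choose m) - (if m = 0 then 0 else of_nat ((n-2) choose (m-1))))
     = of_nat (n^2) / 2 * (of_nat ((n-1) choose m) :: real)"
proof -
  obtain r where n: "n = Suc (Suc r)" using assms by (metis add_2_eq_Suc le_Suc_ex)
  have nm: "n - 2 = r" "n - 1 = Suc r" using n by auto
  have key: "real (n choose 2) * (real (r choose m) - (if m = 0 then 0 else real (r choose (m-1))))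
      = real n / 2 * ((real (Suc r) - 2 * real m) * real (Suc r choose m))"
    unfolding n by (rule choose_two_mult_choose_diff) (use assms n in simp)
  have "(2 * of_nat n - 2 * of_nat m - 1)/2 * (of_nat n * of_nat ((n-1) choose m))
     + (- of_nat (n choose 2)) * (of_nat ((n-2) choose m) - (if m = 0 then 0 else of_nat ((n-2) choose (m-1))))
     = (2 * real n - 2 * real m - 1)/2 * (real n * real (Suc r choose m))
       - real n / 2 * ((real (Suc r) - 2 * real m) * real (Suc r choose m))"
    unfolding nm using key by simp
  also have "\<dots> = real n * real n / 2 * real (Suc r choose m)"
    unfolding n by (simp add: field_simps)
  finally show ?thesis unfolding nm by (simp add: power2_eq_square)
qed

lemma sum_top_coeff_I12_qterms:
  assumes "n \<ge> 2" "m < n"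
  shows "sum_list (map (qterm_top_coeff (2*n-1) s c m) (I12_qterms n)) = of_nat (n^2) / 2 * of_nat ((n-1) choose m) * s^(2*n-2*m-2) * c"
proof -
  let ?K1 = "(2 * of_nat n - 2 * of_nat m - 1)/2 * (s^(2*n-2*m-2) * c)"
  let ?K2 = "- of_nat (n choose 2) * (s^(2*n-2*m-2) * c)"
  define A where "A j k = (if odd j \<and> even k \<and> j + k = 2*m+1
            then of_nat (n choose j) * of_nat (n choose k) * (-1)^(k+m) * (of_nat j - of_nat k) else (0::real))" for j k
  define B where "B j k = (if odd j \<and> odd k \<and> k \<le> n-2 \<and> j + k = 2*m then of_nat (n choose j) * of_nat ((n-2) choose k) * (-1)^(m+k) else 0)
    + (if even j \<and> j \<le> n-2 \<and> even k \<and> j + k = 2*m then of_nat ((n-2) choose j) * of_nat (n choose k) * (-1)^(m+k) else (0::real))" for j k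
  have t: "sum_list (map (qterm_top_coeff (2*n-1) s c m) (I12_qterms_at n j k)) = A j k * ?K1 + B j k * ?K2" if "j < n+1" "k < n+1" for j k
  proof -
    have jk: "j \<le> n" "k \<le> n" using that by auto
    show ?thesis unfolding I12_qterms_at_def
      using qterm_top_coeff_mm[OF jk, of s c m] qterm_top_coeff_mc[OF jk assms(1), of s c m] qterm_top_coeff_cm[OF jk assms(1), of s c m] qterm_top_coeff_cc[OF jk assms(1), of s c m]
      by (simp add: A_def B_def if_zero_mult distrib_right)
  qed
  have "sum_list (map (qterm_top_coeff (2*n-1) s c m) (I12_qterms n)) = (\<Sum>j<n+1. \<Sum>k<n+1. A j k * ?K1 + B j k * ?K2)"
    unfolding sum_list_I12_qterms using t by simp
  also have "\<dots> = (\<Sum>j<n+1. \<Sum>k<n+1. A j k) * ?K1 + (\<Sum>j<n+1. \<Sum>k<n+1. B j k) * ?K2"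
    by (simp only: sum.distrib sum_distrib_right[symmetric])
  also have "(\<Sum>j<n+1. \<Sum>k<n+1. A j k) = of_nat n * of_nat ((n-1) choose m)"
    unfolding A_def by (rule sum_choose_odd_even) (use assms in simp)
  also have "(\<Sum>j<n+1. \<Sum>k<n+1. B j k) = of_nat ((n-2) choose m) - (if m = 0 then 0 else of_nat ((n-2) choose (m-1)))"
    unfolding B_def by (rule sum_choose_n_minus_2[OF assms(1)])
  finally have "sum_list (map (qterm_top_coeff (2*n-1) s c m) (I12_qterms n)) =
     ((2 * of_nat n - 2 * of_nat m - 1)/2 * (of_nat n * of_nat ((n-1) choose m))
     + (- of_nat (n choose 2)) * (of_nat ((n-2) choose m) - (if m = 0 then 0 else of_nat ((n-2) choose (m-1))))) * (s^(2*n-2*m-2) * c)"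
    by (simp add: algebra_simps)
  then show ?thesis unfolding top_coeff_binomial_identity[OF assms] by simp
qed

section \<open>The identity and the bound on the remainders\<close>

definition reduced_flux :: "nat \<Rightarrow> qterm list" where
  "reduced_flux n = concat (map (fst \<circ> ibp_qterm) (I12_qterms n))"

definition reduced_sqterms :: "nat \<Rightarrow> sqterm list" where
  "reduced_sqterms n = concat (map (snd \<circ> ibp_qterm) (I12_qterms n))"

lemma mem_I12_qterms: "x \<in> set (I12_qterms n) \<Longrightarrow> \<exists>j k. j \<le> n \<and> k \<le> n \<and> x \<in> set (I12_qterms_at n j k)"
  unfolding I12_qterms_def by (auto simp del: upt_Suc simp: less_Suc_eq_le; blast)

lemma I12_qterms_bounds: "(k,a,b,i,j) \<in> set (I12_qterms n) \<Longrightarrow> a \<le> 2*n \<and> b \<le> 2 \<and> i \<le> n \<and> j \<le> n"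
  by (drule mem_I12_qterms) (auto simp: I12_qterms_at_def)

lemma I12_qterms_order:
  assumes "x \<in> set (I12_qterms n)" "fst x \<noteq> 0" "n \<ge> 2"
  shows "\<exists>q. 2*n-1 = qterm_order x + 2*q"
proof -
  obtain j k where jk: "j \<le> n" "k \<le> n" "x \<in> set (I12_qterms_at n j k)" using mem_I12_qterms[OF assms(1)] by blast
  consider (mm) "x = (prod_coeff_mm n j k, (n-j)+(n-k), 0, j, k)" | (mc) "x = (prod_coeff_mc n j k, (n-j)+(n-2-k), 1, j, k)"
    | (cm) "x = (prod_coeff_cm n j k, (n-2-j)+(n-k), 1, j, k)" | (cc) "x = (prod_coeff_cc n j k, (n-2-j)+(n-2-k), 2, j, k)"
    using jk(3) unfolding I12_qterms_at_def by auto
  then show ?thesis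
  proof cases
    case mm
    then have "odd j" "even k" using assms(2) by (auto simp: prod_coeff_mm_def split: if_splits)
    then have "2*n-1 = qterm_order x + 2*0" using mm jk assms(3) by (simp add: qterm_order_def; presburger)
    then show ?thesis by blast
  next
    case mc
    then have "odd j" "odd k" "k \<le> n-2" using assms(2) by (auto simp: prod_coeff_mc_def split: if_splits)
    then have "2*n-1 = qterm_order x + 2*0" using mc jk assms(3) by (simp add: qterm_order_def; presburger)
    then show ?thesis by blast
  next
    case cm
    then have "even j" "even k" "j \<le> n-2" using assms(2) by (auto simp: prod_coeff_cm_def split: if_splits)
    then have "2*n-1 = qterm_order x + 2*0" using cm jk assms(3) by (simp add: qterm_order_def; presburger)
    then show ?thesis by blast
  next
    case cc
    then have "even j" "odd k" "j \<le> n-2" "k \<le> n-2" using assms(2) by (auto simp: prod_coeff_cc_def split: if_splits)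
    then have "2*n-1 = qterm_order x + 2*1" using cc jk assms(3) by (simp add: qterm_order_def; presburger)
    then show ?thesis by blast
  qed
qed

lemma reduced_flux_bounds:
  assumes "(k,a,b,i,j) \<in> set (reduced_flux n)"
  shows "a \<le> 2*n+2 \<and> b \<le> 2*n+2 \<and> i \<le> 2*n+2 \<and> j \<le> 2*n+2"
proof -
  obtain x where x: "x \<in> set (I12_qterms n)" "(k,a,b,i,j) \<in> set (fst (ibp_qterm x))"
    using assms unfolding reduced_flux_def by auto
  obtain k0 a0 b0 i0 j0 where x0: "x = (k0,a0,b0,i0,j0)" by (cases x)
  show ?thesis using I12_qterms_bounds[OF x(1)[unfolded x0]] ibp_qterm_degree_bounds[OF x0] x(2) by fastforce
qed

lemma reduced_sqterms_bounds:
  assumes "(k,a,b,m) \<in> set (reduced_sqterms n)"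
  shows "a \<le> 2*n+2 \<and> b \<le> 2*n+2 \<and> m \<le> n"
proof -
  obtain x where x: "x \<in> set (I12_qterms n)" "(k,a,b,m) \<in> set (snd (ibp_qterm x))"
    using assms unfolding reduced_sqterms_def by auto
  obtain k0 a0 b0 i0 j0 where x0: "x = (k0,a0,b0,i0,j0)" by (cases x)
  show ?thesis using I12_qterms_bounds[OF x(1)[unfolded x0]] ibp_qterm_degree_bounds[OF x0] x(2) by fastforce
qed

lemma reduced_sqterms_order:
  assumes "(k,a,b,m) \<in> set (reduced_sqterms n)" "k \<noteq> 0" "n \<ge> 2"
  shows "\<exists>q. 2*n-1 = a + b + 2*m + 2*q"
proof -
  obtain x where x: "x \<in> set (I12_qterms n)" "(k,a,b,m) \<in> set (snd (ibp_qterm x))"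
    using assms unfolding reduced_sqterms_def by auto
  have "fst x \<noteq> 0"
  proof
    assume "fst x = 0"
    then show False using x(2) assms(2) ibp_zero_coeff by (cases x) (force simp: ibp_qterm_def)
  qed
  then obtain q1 where "2*n-1 = qterm_order x + 2*q1" using I12_qterms_order x(1) assms(3) by blast
  moreover obtain q2 where "qterm_order x = a + b + 2*m + 2*q2" using ibp_qterm_sq_order[OF x(2)] by blast
  ultimately have "2*n-1 = a + b + 2*m + 2*(q1+q2)" by simp
  then show ?thesis by blast
qed

lemma top_coeff_reduced_sqterms:
  assumes "n \<ge> 2" "m < n"
  shows "sum_list (map (top_coeff s c (2*n-1) m) (reduced_sqterms n)) = of_nat (n^2) / 2 * of_nat ((n-1) choose m) * s^(2*n-2*m-2) * c"
proof -
  have "sum_list (map (top_coeff s c (2*n-1) m) (reduced_sqterms n))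
      = sum_list (map (\<lambda>x. sum_list (map (top_coeff s c (2*n-1) m) (snd (ibp_qterm x)))) (I12_qterms n))"
    unfolding reduced_sqterms_def by (simp only: sum_list_map_concat map_map o_def)
  also have "\<dots> = sum_list (map (qterm_top_coeff (2*n-1) s c m) (I12_qterms n))"
    using sum_top_coeff_ibp_qterm I12_qterms_order assms(1) by (intro arg_cong[where f=sum_list] map_cong) auto
  finally show ?thesis using sum_top_coeff_I12_qterms[OF assms] by simp
qed

text \<open>The squares of order exactly 2n - 1 form the leading term; R_m collects all others, which
  have order at most 2n - 3.\<close>

definition flux_coeffs :: "nat \<Rightarrow> nat \<Rightarrow> nat \<Rightarrow> nat \<Rightarrow> nat \<Rightarrow> real" where
  "flux_coeffs n = qterm_coeffs (reduced_flux n)"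

definition remainder_coeffs :: "nat \<Rightarrow> nat \<Rightarrow> nat \<Rightarrow> nat \<Rightarrow> real" where
  "remainder_coeffs n = sqterm_coeffs (\<lambda>a b m. a + b + 2*m \<noteq> 2*n-1) (reduced_sqterms n)"

lemma sum_qterm_val_reduced_flux:
  "sum_list (map (qterm_val s c u) (reduced_flux n))
     = (\<Sum>a\<le>2*n+2. \<Sum>b\<le>2*n+2. \<Sum>i\<le>2*n+2. \<Sum>j\<le>2*n+2. flux_coeffs n a b i j * s^a * c^b * u i * u j)"
  unfolding flux_coeffs_def
  by (rule sum_qterm_val_eq_coeffs) (use reduced_flux_bounds in fastforce)

lemma sq_sum_reduced_sqterms:
  assumes "n \<ge> 2"
  shows "sq_sum s c u (reduced_sqterms n) = (\<Sum>m<n. (of_nat (n^2) / 2 * of_nat ((n - 1) choose m) * s^(2*n - 2*m - 2) * c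
       + (\<Sum>a\<le>2*n+2. \<Sum>b\<le>2*n+2. remainder_coeffs n m a b * s^a * c^b)) * (u m)^2)"
proof -
  have "\<forall>e\<in>set (reduced_sqterms n). case e of (k,a,b,m) \<Rightarrow> k \<noteq> 0 \<longrightarrow> m < n"
    using reduced_sqterms_order assms by fastforce
  then have "sq_sum s c u (reduced_sqterms n)
      = (\<Sum>m<n. sum_list (map (\<lambda>(k,a,b,m'). if m' = m then k * s^a * c^b else 0) (reduced_sqterms n)) * (u m)^2)"
    by (rule sq_sum_by_index)
  also have "\<dots> = (\<Sum>m<n. (of_nat (n^2) / 2 * of_nat ((n - 1) choose m) * s^(2*n - 2*m - 2) * c
       + (\<Sum>a\<le>2*n+2. \<Sum>b\<le>2*n+2. remainder_coeffs n m a b * s^a * c^b)) * (u m)^2)"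
  proof (intro sum.cong refl)
    fix m assume "m \<in> {..<n}"
    then show "sum_list (map (\<lambda>(k,a,b,m'). if m' = m then k * s^a * c^b else 0) (reduced_sqterms n)) * (u m)^2
      = (of_nat (n^2) / 2 * of_nat ((n - 1) choose m) * s^(2*n - 2*m - 2) * c
         + (\<Sum>a\<le>2*n+2. \<Sum>b\<le>2*n+2. remainder_coeffs n m a b * s^a * c^b)) * (u m)^2"
      using sqterm_sum_split_top[of m s c "reduced_sqterms n" "2*n-1"] top_coeff_reduced_sqterms[OF assms, of m s c]
        sum_sqterm_eq_coeffs[of "reduced_sqterms n" "2*n+2" m "\<lambda>a b m. a + b + 2*m \<noteq> 2*n-1" s c]
        reduced_sqterms_bounds
      by (force simp: remainder_coeffs_def)
  qed
  finally show ?thesis .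
qed

lemma I1_I2_flux_identity:
  fixes lam x0 t0 \<beta> :: real
  defines "l \<equiv> ell lam x0 t0 \<beta>"
  assumes "n \<ge> 2" and "smooth2 w"
  shows "((\<lambda>y. Gsum (2*n+2) (flux_coeffs n) l w (t, y)) has_real_derivative
          (I1 n l w (t, x) * I2 n l w (t, x)
           - (\<Sum>m<n. (of_nat (n^2) / 2 * of_nat ((n - 1) choose m)
                        * (partial_x l (t, x))^(2*n - 2*m - 2) * partial_x (partial_x l) (t, x)
                       + Rpoly (2*n+2) (remainder_coeffs n m) l (t, x)) * (dx m w (t, x))^2))) (at x)"
proof -
  define S where "S y = 2 * lam * (y - x0)" for y
  define U where "U y i = dx i w (t,y)" for y i
  have lx: "partial_x l (t,y) = S y" and lxx: "partial_x (partial_x l) (t,y) = 2*lam" for y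
    unfolding l_def S_def by (rule partial_x_ell partial_x_partial_x_ell)+
  have "(S has_real_derivative 2*lam) (at x)"
    unfolding S_def by (auto intro!: derivative_eq_intros)
  moreover have "((\<lambda>y. U y i) has_real_derivative U x (Suc i)) (at x)" for i
    unfolding U_def by (rule has_real_derivative_dx[OF assms(3)])
  ultimately have "((\<lambda>y. sum_list (map (qterm_val (S y) (2*lam) (U y)) (reduced_flux n)))
      has_real_derivative deriv_sum (S x) (2*lam) (U x) (reduced_flux n)) (at x)"
    by (rule has_real_derivative_sum_qterm_val)
  moreover have "Gsum (2*n+2) (flux_coeffs n) l w (t,y) = sum_list (map (qterm_val (S y) (2*lam) (U y)) (reduced_flux n))" for y
    unfolding sum_qterm_val_reduced_flux Gsum_def lx lxx U_def ..
  moreover have "I1 n l w (t,x) * I2 n l w (t,x)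
      = deriv_sum (S x) (2*lam) (U x) (reduced_flux n) + sq_sum (S x) (2*lam) (U x) (reduced_sqterms n)"
    using I1_times_I2[OF assms(2), of l w "(t,x)"]
    unfolding sum_qterm_val_ibp reduced_flux_def reduced_sqterms_def lx lxx U_def by simp
  ultimately show ?thesis
    unfolding sq_sum_reduced_sqterms[OF assms(2)] Rpoly_def lx lxx U_def by simp
qed

lemma abs_power_lambda_le:
  fixes lam y M :: real
  assumes "lam \<ge> 1" "\<bar>y\<bar> \<le> M" "real (a + b) \<le> E"
  shows "\<bar>(2 * lam * y)^a * (2 * lam)^b\<bar> \<le> (2 * M)^a * 2^b * lam powr E"
proof -
  have "\<bar>(2 * lam * y)^a\<bar> = (2 * lam * \<bar>y\<bar>)^a" using assms(1) by (simp add: power_abs abs_mult)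
  also have "\<dots> \<le> (2 * lam * M)^a" using assms(1,2) by (intro power_mono) auto
  finally have "\<bar>(2 * lam * y)^a * (2 * lam)^b\<bar> \<le> (2 * M)^a * 2^b * (lam^a * lam^b)"
    using assms(1) by (simp add: abs_mult power_mult_distrib mult_right_mono algebra_simps)
  also have "lam^a * lam^b = lam powr real (a + b)"
    using assms(1) by (subst powr_realpow) (auto simp: power_add)
  also have "\<dots> \<le> lam powr E" using assms(1,3) by (intro powr_mono) auto
  finally show ?thesis using assms(2) by (simp add: mult_left_mono)
qed

lemma Rpoly_ell_bound:
  assumes "\<And>a b. r a b \<noteq> 0 \<Longrightarrow> real (a + b) \<le> E" "bounded K"
  shows "\<exists>C. \<forall>lam::real. lam \<ge> 1 \<longrightarrow> (\<forall>p\<in>K. \<bar>Rpoly D r (ell lam x0 t0 \<beta>) p\<bar> \<le> C * lam powr E)"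
proof -
  obtain B where B: "\<forall>p\<in>K. norm p \<le> B" using assms(2) bounded_iff by blast
  define M where "M = \<bar>B\<bar> + \<bar>x0\<bar>"
  define C where "C = (\<Sum>a\<le>D. \<Sum>b\<le>D. \<bar>r a b\<bar> * (2*M)^a * 2^b)"
  show ?thesis
  proof (intro exI[of _ C] allI impI ballI)
    fix lam :: real and p assume lam: "lam \<ge> 1" and p: "p \<in> K"
    obtain t x where tx: "p = (t,x)" by (cases p)
    have "\<bar>x\<bar> \<le> norm p" using norm_snd_le[of x t] tx by simp
    then have xM: "\<bar>x - x0\<bar> \<le> M" using B p unfolding M_def by auto
    have "\<bar>r a b * (2 * lam * (x - x0))^a * (2*lam)^b\<bar> \<le> \<bar>r a b\<bar> * (2*M)^a * 2^b * lam powr E" for a b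
      using abs_power_lambda_le[OF lam xM, of a b E] assms(1)[of a b]
      by (cases "r a b = 0") (auto simp: abs_mult mult.assoc intro: mult_left_mono)
    then have "(\<Sum>a\<le>D. \<Sum>b\<le>D. \<bar>r a b * (2 * lam * (x - x0))^a * (2*lam)^b\<bar>) \<le> C * lam powr E"
      unfolding C_def sum_distrib_right by (intro sum_mono)
    moreover have "\<bar>Rpoly D r (ell lam x0 t0 \<beta>) p\<bar> \<le> (\<Sum>a\<le>D. \<Sum>b\<le>D. \<bar>r a b * (2 * lam * (x - x0))^a * (2*lam)^b\<bar>)"
      unfolding Rpoly_def tx partial_x_ell partial_x_partial_x_ell
      by (rule order.trans[OF sum_abs]) (intro sum_mono sum_abs)
    ultimately show "\<bar>Rpoly D r (ell lam x0 t0 \<beta>) p\<bar> \<le> C * lam powr E" by linarith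
  qed
qed

lemma remainder_coeffs_degree:
  assumes "remainder_coeffs n m a b \<noteq> 0" "n \<ge> 2"
  shows "real (a + b) \<le> real (2*n) - 2 * real m - 3"
proof -
  obtain k where k: "k \<noteq> 0" "(k,a,b,m) \<in> set (reduced_sqterms n)" "a + b + 2*m \<noteq> 2*n-1"
    using sqterm_coeffs_nonzero assms(1) unfolding remainder_coeffs_def by blast
  obtain q where "2*n-1 = a + b + 2*m + 2*q" using reduced_sqterms_order k(1,2) assms(2) by blast
  with k(3) have "a + b + 2*m + 3 \<le> 2*n" by (cases q) auto
  then show ?thesis by linarith
qed

theorem proposition3p1:
  fixes n :: nat and x0 t0 \<beta> :: real
  assumes "n \<ge> 2" and "\<beta> > 0"
  shows "\<exists>(D::nat) (g::nat \<Rightarrow> nat \<Rightarrow> nat \<Rightarrow> nat \<Rightarrow> real) (r::nat \<Rightarrow> nat \<Rightarrow> nat \<Rightarrow> real).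
    (\<forall>lam::real. lam \<ge> 1 \<longrightarrow> (\<forall>w. smooth2 w \<longrightarrow> (\<forall>t x.
       let l = ell lam x0 t0 \<beta> in
       ((\<lambda>y. Gsum D g l w (t, y)) has_real_derivative
          (I1 n l w (t, x) * I2 n l w (t, x)
           - (\<Sum>m<n. (of_nat (n^2) / 2 * of_nat ((n - 1) choose m)
                        * (partial_x l (t, x))^(2*n - 2*m - 2) * partial_x (partial_x l) (t, x)
                       + Rpoly D (r m) l (t, x)) * (dx m w (t, x))^2))) (at x))))
    \<and> (\<forall>m<n. \<forall>K::(real \<times> real) set. bounded K \<longrightarrow>
         (\<exists>C. \<forall>lam::real. lam \<ge> 1 \<longrightarrow> (\<forall>p\<in>K.
            \<bar>Rpoly D (r m) (ell lam x0 t0 \<beta>) p\<bar> \<le> C * lam powr (real (2*n) - 2 * real m - 3))))"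
proof (intro exI[of _ "2*n+2"] exI[of _ "flux_coeffs n"] exI[of _ "remainder_coeffs n"] conjI allI impI)
  fix lam t x :: real and w assume "lam \<ge> 1" and w: "smooth2 w"
  show "let l = ell lam x0 t0 \<beta> in
       ((\<lambda>y. Gsum (2*n+2) (flux_coeffs n) l w (t, y)) has_real_derivative
          (I1 n l w (t, x) * I2 n l w (t, x)
           - (\<Sum>m<n. (of_nat (n^2) / 2 * of_nat ((n - 1) choose m)
                        * (partial_x l (t, x))^(2*n - 2*m - 2) * partial_x (partial_x l) (t, x)
                       + Rpoly (2*n+2) (remainder_coeffs n m) l (t, x)) * (dx m w (t, x))^2))) (at x)"
    unfolding Let_def by (rule I1_I2_flux_identity[OF assms(1) w])
next
  fix m and K :: "(real \<times> real) set" assume "m < n" "bounded K"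
  then show "\<exists>C. \<forall>lam::real. lam \<ge> 1 \<longrightarrow> (\<forall>p\<in>K.
      \<bar>Rpoly (2*n+2) (remainder_coeffs n m) (ell lam x0 t0 \<beta>) p\<bar> \<le> C * lam powr (real (2*n) - 2 * real m - 3))"
    using Rpoly_ell_bound remainder_coeffs_degree assms(1) by blast
qed

end
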